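(* Let $G$ be a connected graph and $U\subseteq V(G)$ such that every $U$-rooted minor of $G$ with countable branch sets has countable colouring number. Let $(T,\mathcal V)$ be a slim $U$-rooted normal semi-partition tree of $G$ with $U\subseteq V(G(T))$. Then every infinite set $X\subseteq T$ is included in a rooted subtree $T'\subseteq T$ with $|T'|=|X|$ such that $G(T')$ has finite adhesion in $G$ towards $U$.
   Context: Minors are given by disjoint connected branch sets; a minor is $U$-rooted if every branch set meets $U$. Countable colouring number: a well-order of the vertices in which each vertex is preceded by only finitely many neighbours. An order tree is a poset with unique minimal element in which every down-closure $\lceil t\rceil$ is well-ordered; $\mathring{\lceil t\rceil}=\lceil t\rceil\setminus\{t\}$; height of $t$ = order type of $\mathring{\lceil t\rceil}$; rooted subtree = down-closed subset. A $T$-graph is a graph on $T$ whose edges have comparable endvertices and where the lower neighbours of each $t$ are cofinal in $\mathring{\lceil t\rceil}$. $(T,(V_t)_{t\in T})$ with nonempty $V_t\subseteq V(G)$ is a normal semi-partition tree if the $V_t$ are pairwise disjoint, each $G[V_t]$ connected, contracting each $V_t$ in $G[\bigcup V_t]$ gives a $T$-graph, and for every path in $G$ with at least one edge, endvertices in $V_t,V_{t'}$, inner vertices outside $\bigcup V_s$ and no edges inside $G[\bigcup V_s]$, $t,t'$ are comparable. Slim: $|V_t|\le|\mathrm{height}(t)|+\aleph_0$; $U$-rooted: each $V_t$ meets $U$. $G(S)=G[\bigcup_{t\in S}V_t]$. An induced subgraph $H$ has finite adhesion in $G$ towards $U$ if every component of $G-H$ containing a vertex of $U$ has only finitely many neighbours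 in $H$. *)

theory Defs
  imports Main "HOL-Library.Equipollence" "HOL-Library.Countable_Set"
begin

definition graph :: "'v set \<Rightarrow> ('v \<times> 'v) set \<Rightarrow> bool" where
  "graph VG E \<longleftrightarrow> E \<subseteq> VG \<times> VG \<and> sym E \<and> irrefl E"

definition connected_in :: "('v \<times> 'v) set \<Rightarrow> 'v set \<Rightarrow> bool" where
  "connected_in E S \<longleftrightarrow> S \<noteq> {} \<and> (\<forall>x\<in>S. \<forall>y\<in>S. (x, y) \<in> (E \<inter> (S \<times> S))\<^sup>*)"

text \<open>The minor is represented with its vertex set
being the family B of (pairwise disjoint, nonempty, connected) branch sets
themselves; F is the edge relation of the minor, and every edge of the minor
is witnessed by an edge of G between the two branch sets.\<close>
definition minor_by_branch_sets ::
  "'v set \<Rightarrow> ('v \<times> 'v) set \<Rightarrow> 'v set set \<Rightarrow> ('v set \<times> 'v set) set \<Rightarrow> bool" where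
  "minor_by_branch_sets VG E B F \<longleftrightarrow>
     (\<forall>b\<in>B. b \<subseteq> VG \<and> connected_in E b) \<and> pairwise disjnt B \<and> graph B F \<and>
     (\<forall>(a, b)\<in>F. \<exists>x\<in>a. \<exists>y\<in>b. (x, y) \<in> E)"

definition rooted_minor ::
  "'v set \<Rightarrow> ('v \<times> 'v) set \<Rightarrow> 'v set \<Rightarrow> 'v set set \<Rightarrow> ('v set \<times> 'v set) set \<Rightarrow> bool" where
  "rooted_minor VG E U B F \<longleftrightarrow> minor_by_branch_sets VG E B F \<and> (\<forall>b\<in>B. b \<inter> U \<noteq> {})"

definition countable_colouring_number :: "'a set \<Rightarrow> ('a \<times> 'a) set \<Rightarrow> bool" where
  "countable_colouring_number VH F \<longleftrightarrow>
     (\<exists>r. well_order_on VH r \<and>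
          (\<forall>x\<in>VH. finite {y\<in>VH. (y, x) \<in> r \<and> y \<noteq> x \<and> (y, x) \<in> F}))"

definition component_of :: "'v set \<Rightarrow> ('v \<times> 'v) set \<Rightarrow> 'v set \<Rightarrow> 'v set \<Rightarrow> bool" where
  "component_of VG E W C \<longleftrightarrow> C \<subseteq> VG - W \<and> connected_in E C \<and>
     (\<forall>C'. C \<subseteq> C' \<and> C' \<subseteq> VG - W \<and> connected_in E C' \<longrightarrow> C' = C)"

definition finite_adhesion_towards ::
  "'v set \<Rightarrow> ('v \<times> 'v) set \<Rightarrow> 'v set \<Rightarrow> 'v set \<Rightarrow> bool" where
  "finite_adhesion_towards VG E W U \<longleftrightarrow>
     (\<forall>C. component_of VG E W C \<and> C \<inter> U \<noteq> {} \<longrightarrow>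
          finite {w\<in>W. \<exists>c\<in>C. (c, w) \<in> E})"

definition down :: "'t set \<Rightarrow> ('t \<times> 't) set \<Rightarrow> 't \<Rightarrow> 't set" where
  "down T le t = {s\<in>T. (s, t) \<in> le}"

definition sdown :: "'t set \<Rightarrow> ('t \<times> 't) set \<Rightarrow> 't \<Rightarrow> 't set" where
  "sdown T le t = {s\<in>T. (s, t) \<in> le \<and> s \<noteq> t}"

definition order_tree :: "'t set \<Rightarrow> ('t \<times> 't) set \<Rightarrow> bool" where
  "order_tree T le \<longleftrightarrow> le \<subseteq> T \<times> T \<and> partial_order_on T le \<and>
     (\<exists>!r. r \<in> T \<and> (\<forall>s\<in>T. (s, r) \<in> le \<longrightarrow> s = r)) \<and>
     (\<forall>t\<in>T. well_order_on (down T le t) (Restr le (down T le t)))"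

definition comparable :: "('t \<times> 't) set \<Rightarrow> 't \<Rightarrow> 't \<Rightarrow> bool" where
  "comparable le s t \<longleftrightarrow> (s, t) \<in> le \<or> (t, s) \<in> le"

definition rooted_subtree :: "'t set \<Rightarrow> ('t \<times> 't) set \<Rightarrow> 't set \<Rightarrow> bool" where
  "rooted_subtree T le T' \<longleftrightarrow> T' \<subseteq> T \<and> (\<forall>t\<in>T'. \<forall>s\<in>T. (s, t) \<in> le \<longrightarrow> s \<in> T')"

definition T_graph :: "'t set \<Rightarrow> ('t \<times> 't) set \<Rightarrow> ('t \<times> 't) set \<Rightarrow> bool" where
  "T_graph T le F \<longleftrightarrow> graph T F \<and> (\<forall>(s, t)\<in>F. comparable le s t) \<and>
     (\<forall>t\<in>T. \<forall>s\<in>sdown T le t. \<exists>u\<in>sdown T le t. (s, u) \<in> le \<and> (u, t) \<in> F)"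

definition parts_union :: "('t \<Rightarrow> 'v set) \<Rightarrow> 't set \<Rightarrow> 'v set" where
  "parts_union Vt S = (\<Union>t\<in>S. Vt t)"

definition contracted_graph ::
  "('v \<times> 'v) set \<Rightarrow> 't set \<Rightarrow> ('t \<Rightarrow> 'v set) \<Rightarrow> ('t \<times> 't) set" where
  "contracted_graph E T Vt = {(s, t). s \<in> T \<and> t \<in> T \<and> s \<noteq> t \<and>
      (\<exists>x\<in>Vt s. \<exists>y\<in>Vt t. (x, y) \<in> E)}"

definition is_path :: "'v set \<Rightarrow> ('v \<times> 'v) set \<Rightarrow> 'v list \<Rightarrow> bool" where
  "is_path VG E xs \<longleftrightarrow> xs \<noteq> [] \<and> distinct xs \<and> set xs \<subseteq> VG \<and>
     (\<forall>i. Suc i < length xs \<longrightarrow> (xs ! i, xs ! Suc i) \<in> E)"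

definition normal_semi_partition_tree ::
  "'v set \<Rightarrow> ('v \<times> 'v) set \<Rightarrow> 't set \<Rightarrow> ('t \<times> 't) set \<Rightarrow> ('t \<Rightarrow> 'v set) \<Rightarrow> bool" where
  "normal_semi_partition_tree VG E T le Vt \<longleftrightarrow>
     order_tree T le \<and>
     (\<forall>t\<in>T. Vt t \<noteq> {} \<and> Vt t \<subseteq> VG \<and> connected_in E (Vt t)) \<and>
     (\<forall>s\<in>T. \<forall>t\<in>T. s \<noteq> t \<longrightarrow> Vt s \<inter> Vt t = {}) \<and>
     T_graph T le (contracted_graph E T Vt) \<and>
     (\<forall>xs s t. is_path VG E xs \<and> length xs \<ge> 2 \<and> s \<in> T \<and> t \<in> T \<and>
        hd xs \<in> Vt s \<and> last xs \<in> Vt t \<and>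
        set (butlast (tl xs)) \<inter> parts_union Vt T = {} \<and>
        (\<forall>i. Suc i < length xs \<longrightarrow>
             \<not> (xs ! i \<in> parts_union Vt T \<and> xs ! Suc i \<in> parts_union Vt T))
        \<longrightarrow> comparable le s t)"

text \<open>Slim: |V_t| \<le> |height(t)| + aleph_0, where |height(t)| = |strict down-closure of t|;
the cardinal sum is realised as a disjoint sum with the naturals.\<close>
definition slim :: "'t set \<Rightarrow> ('t \<times> 't) set \<Rightarrow> ('t \<Rightarrow> 'v set) \<Rightarrow> bool" where
  "slim T le Vt \<longleftrightarrow> (\<forall>t\<in>T. Vt t \<lesssim> (sdown T le t <+> (UNIV :: nat set)))"

definition U_rooted_parts :: "'t set \<Rightarrow> ('t \<Rightarrow> 'v set) \<Rightarrow> 'v set \<Rightarrow> bool" where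
  "U_rooted_parts T Vt U \<longleftrightarrow> (\<forall>t\<in>T. Vt t \<inter> U \<noteq> {})"

end

theory Submission
  imports Defs
begin

text \<open>
  Two minors whose colouring orders would have to fail drive the proof.

  First, every down-closure is countable. At a minimal node \<open>t\<close> with uncountable down-closure,
  take a colouring order of the contracted graph on \<open>\<lceil>t\<rceil>\<^sup>\<circ>\<close> (a rooted minor with countable
  branch sets). Closing one node under down-closures, successors and its finitely many earlier
  neighbours gives a countable down-closed \<open>I \<subset> \<lceil>t\<rceil>\<^sup>\<circ>\<close> without maximum; the least node \<open>d\<close>
  above \<open>I\<close> is a limit, so it has infinitely many lower neighbours, one of them later than \<open>d\<close>,
  which puts \<open>d\<close> into \<open>I\<close>. By slimness all parts are countable.

  Second, every node \<open>s\<close> has only countably many bad children \<open>t\<close>, that is, children whose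
  component \<open>D\<^sub>t\<close> of \<open>G - G(\<lceil>s\<rceil>)\<close> has infinitely many neighbours in \<open>G(\<lceil>s\<rceil>)\<close>: uncountably
  many disjoint rooted \<open>D\<^sub>t\<close> attaching infinitely often to the countable set \<open>G(\<lceil>s\<rceil>)\<close> yield,
  via finite connectors, a rooted minor with countable branch sets in which some vertex has
  infinitely many earlier neighbours.

  Now close \<open>X\<close> under down-closures, earlier neighbours and bad children; every step adds
  countably many nodes, so the closure \<open>T'\<close> has the cardinality of \<open>X\<close>. For a component \<open>C\<close> of
  \<open>G - G(T')\<close> meeting \<open>U\<close>, let \<open>t\<close> be minimal in \<open>T - T'\<close> below a part meeting \<open>C\<close>. A limit \<open>t\<close>
  would be an earlier neighbour of a node of \<open>T'\<close>, so \<open>t\<close> is a child of some \<open>s \<in> T'\<close>, it is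
  not bad, and the neighbourhood of \<open>C\<close> in \<open>G(T')\<close> lies in the finite neighbourhood of \<open>D\<^sub>t\<close>.
\<close>

section \<open>Connected vertex sets and components\<close>

lemma rtrancl_Restr_mono:
  "(x, y) \<in> (E \<inter> A \<times> A)\<^sup>* \<Longrightarrow> A \<subseteq> B \<Longrightarrow> (x, y) \<in> (E \<inter> B \<times> B)\<^sup>*"
  using rtrancl_mono[of "E \<inter> A \<times> A" "E \<inter> B \<times> B"] by blast

lemma rtrancl_Restr_sym:
  assumes "sym E" "(x, y) \<in> (E \<inter> A \<times> A)\<^sup>*"
  shows "(y, x) \<in> (E \<inter> A \<times> A)\<^sup>*"
proof -
  have "sym (E \<inter> A \<times> A)" using assms(1) by (auto simp: sym_def)
  then show ?thesis using assms(2) by (blast intro: symD[OF sym_rtrancl])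
qed

lemma connected_in_UN:
  assumes "sym E" "I \<noteq> {}" "\<And>i. i \<in> I \<Longrightarrow> connected_in E (A i) \<and> u \<in> A i"
  shows "connected_in E (\<Union>i\<in>I. A i)"
proof -
  let ?A = "\<Union>i\<in>I. A i"
  have to_u: "(x, u) \<in> (E \<inter> ?A \<times> ?A)\<^sup>*" if x: "x \<in> ?A" for x
  proof -
    obtain i where "i \<in> I" "x \<in> A i" using x by blast
    then have "(x, u) \<in> (E \<inter> A i \<times> A i)\<^sup>*" using assms(3) by (auto simp: connected_in_def)
    then show ?thesis by (rule rtrancl_Restr_mono) (use \<open>i \<in> I\<close> in blast)
  qed
  show ?thesis
    unfolding connected_in_def
    using assms(2,3) to_u rtrancl_Restr_sym[OF assms(1) to_u] by (blast intro: rtrancl_trans)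
qed

lemma connected_in_insert_edge:
  assumes "sym E" "connected_in E P" "y \<in> P" "(y, z) \<in> E"
  shows "connected_in E (insert z P)"
proof -
  let ?Q = "insert z P"
  have to_y: "(a, y) \<in> (E \<inter> ?Q \<times> ?Q)\<^sup>*" if "a \<in> ?Q" for a
  proof (cases "a = z")
    case True
    then show ?thesis using assms(1,3,4) by (auto simp: sym_def intro!: r_into_rtrancl)
  next
    case False
    then have "(a, y) \<in> (E \<inter> P \<times> P)\<^sup>*" using that assms(2,3) by (auto simp: connected_in_def)
    then show ?thesis by (rule rtrancl_Restr_mono) blast
  qed
  show ?thesis
    unfolding connected_in_def
    using to_y rtrancl_Restr_sym[OF assms(1) to_y] by (blast intro: rtrancl_trans)
qed

lemma connected_in_finite_connector:
  assumes "sym E" "connected_in E D" "a \<in> D" "b \<in> D"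
  obtains P where "finite P" "P \<subseteq> D" "a \<in> P" "b \<in> P" "connected_in E P"
proof -
  have "(a, b) \<in> (E \<inter> D \<times> D)\<^sup>*" using assms(2-4) by (auto simp: connected_in_def)
  then have "\<exists>P. finite P \<and> P \<subseteq> D \<and> a \<in> P \<and> b \<in> P \<and> connected_in E P"
  proof (induction rule: rtrancl_induct)
    case base
    then show ?case using assms(3) by (intro exI[of _ "{a}"]) (auto simp: connected_in_def)
  next
    case (step y z)
    then obtain P where P: "finite P" "P \<subseteq> D" "a \<in> P" "y \<in> P" "connected_in E P" by blast
    then show ?case
      using step(2) connected_in_insert_edge[OF assms(1) P(5,4)] by (intro exI[of _ "insert z P"]) auto
  qed
  then show ?thesis using that by blast
qed

definition component_at :: "'v set \<Rightarrow> ('v \<times> 'v) set \<Rightarrow> 'v set \<Rightarrow> 'v \<Rightarrow> 'v set" where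
  "component_at VG E W x = {y. (x, y) \<in> (E \<inter> (VG - W) \<times> (VG - W))\<^sup>*}"

lemma self_in_component_at: "x \<in> component_at VG E W x"
  by (simp add: component_at_def)

lemma component_at_subset: "x \<in> VG - W \<Longrightarrow> component_at VG E W x \<subseteq> VG - W"
  unfolding component_at_def by (blast elim: rtranclE)

lemma component_at_antimono: "W' \<subseteq> W \<Longrightarrow> component_at VG E W x \<subseteq> component_at VG E W' x"
  unfolding component_at_def using rtrancl_Restr_mono[of x _ E "VG - W" "VG - W'"] by blast

lemma component_at_edge:
  assumes "x \<in> VG - W" "c \<in> component_at VG E W x" "w \<in> VG - W" "(c, w) \<in> E"
  shows "w \<in> component_at VG E W x"
  using assms component_at_subset[OF assms(1)]
  by (auto simp: component_at_def intro: rtrancl_into_rtrancl)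

lemma component_at_eq:
  assumes "sym E" "y \<in> component_at VG E W x"
  shows "component_at VG E W y = component_at VG E W x"
  using assms rtrancl_Restr_sym[OF assms(1)] by (auto simp: component_at_def intro: rtrancl_trans)

lemma connected_component_at:
  assumes "sym E" "x \<in> VG - W"
  shows "connected_in E (component_at VG E W x)"
proof -
  let ?C = "component_at VG E W x"
  have from_x: "(x, y) \<in> (E \<inter> ?C \<times> ?C)\<^sup>*" if "y \<in> ?C" for y
  proof -
    have "(x, y) \<in> (E \<inter> (VG - W) \<times> (VG - W))\<^sup>*" using that by (simp add: component_at_def)
    then show ?thesis
    proof (induction rule: rtrancl_induct)
      case (step y z)
      then have "y \<in> ?C" "z \<in> ?C"
        by (auto simp: component_at_def intro: rtrancl_into_rtrancl)
      then show ?case using step by (blast intro: rtrancl_into_rtrancl)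
    qed simp
  qed
  show ?thesis
    unfolding connected_in_def
  proof (intro conjI ballI)
    show "?C \<noteq> {}" using self_in_component_at by fast
    fix a b assume "a \<in> ?C" "b \<in> ?C"
    then show "(a, b) \<in> (E \<inter> ?C \<times> ?C)\<^sup>*"
      using from_x rtrancl_Restr_sym[OF assms(1) from_x] rtrancl_trans by metis
  qed
qed

lemma connected_subset_component_at:
  assumes "connected_in E P" "P \<subseteq> VG - W" "x \<in> P"
  shows "P \<subseteq> component_at VG E W x"
proof
  fix y assume "y \<in> P"
  then have "(x, y) \<in> (E \<inter> P \<times> P)\<^sup>*" using assms(1,3) by (simp add: connected_in_def)
  then show "y \<in> component_at VG E W x"
    unfolding component_at_def using rtrancl_Restr_mono[OF _ assms(2)] by blast
qed

lemma component_of_eq_component_at: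
  assumes "sym E" "component_of VG E W C" "x \<in> C"
  shows "C = component_at VG E W x"
proof -
  have C: "C \<subseteq> VG - W" "connected_in E C" using assms(2) by (auto simp: component_of_def)
  then have sub: "C \<subseteq> component_at VG E W x" using connected_subset_component_at assms(3) by metis
  have x: "x \<in> VG - W" using C(1) assms(3) by blast
  have "\<forall>C'. C \<subseteq> C' \<and> C' \<subseteq> VG - W \<and> connected_in E C' \<longrightarrow> C' = C"
    using assms(2) by (simp add: component_of_def)
  then show ?thesis
    using sub component_at_subset[OF x] connected_component_at[OF assms(1) x] by blast
qed

definition nbrs_in :: "('v \<times> 'v) set \<Rightarrow> 'v set \<Rightarrow> 'v set \<Rightarrow> 'v set" where
  "nbrs_in E D Y = {y \<in> Y. \<exists>c\<in>D. (c, y) \<in> E}"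

lemma finite_adhesion_towards_iff:
  "finite_adhesion_towards VG E W U \<longleftrightarrow>
     (\<forall>C. component_of VG E W C \<and> C \<inter> U \<noteq> {} \<longrightarrow> finite (nbrs_in E C W))"
  by (simp add: finite_adhesion_towards_def nbrs_in_def)

lemma is_path_iff_successively:
  "is_path VG E xs \<longleftrightarrow>
     xs \<noteq> [] \<and> distinct xs \<and> set xs \<subseteq> VG \<and> successively (\<lambda>x y. (x, y) \<in> E) xs"
  by (simp add: is_path_def successively_conv_nth)

lemma rtrancl_Restr_imp_path:
  assumes "(a, b) \<in> (E \<inter> S \<times> S)\<^sup>*"
  obtains xs where "xs \<noteq> []" "distinct xs" "hd xs = a" "last xs = b" "set xs \<subseteq> insert a S"
    "successively (\<lambda>x y. (x, y) \<in> E) xs"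
proof -
  have "\<exists>xs. xs \<noteq> [] \<and> distinct xs \<and> hd xs = a \<and> last xs = b \<and> set xs \<subseteq> insert a S \<and>
             successively (\<lambda>x y. (x, y) \<in> E) xs"
    using assms
  proof (induction rule: rtrancl_induct)
    case base
    show ?case by (intro exI[of _ "[a]"]) simp
  next
    case (step y z)
    then obtain xs where xs: "xs \<noteq> []" "distinct xs" "hd xs = a" "last xs = y"
      "set xs \<subseteq> insert a S" "successively (\<lambda>x y. (x, y) \<in> E) xs" by blast
    show ?case
    proof (cases "z \<in> set xs")
      case True
      then obtain ys zs where split: "xs = ys @ z # zs" by (meson split_list)
      have "hd (ys @ [z]) = a" using xs(3) split by (cases ys) auto
      moreover have "successively (\<lambda>x y. (x, y) \<in> E) (ys @ [z])"
        using xs(6) split successively_append_iff[of _ "ys @ [z]" zs] by simp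
      ultimately show ?thesis using xs(2,5) split by (intro exI[of _ "ys @ [z]"]) auto
    next
      case False
      then show ?thesis using xs step(2)
        by (intro exI[of _ "xs @ [z]"]) (auto simp: successively_append_iff)
    qed
  qed
  then show ?thesis using that by blast
qed

lemma connected_in_insert_nbr:
  assumes "sym E" "connected_in E P" "y \<in> nbrs_in E P Y"
  shows "connected_in E (insert y P)"
proof -
  obtain c where "c \<in> P" "(c, y) \<in> E" using assms(3) by (auto simp: nbrs_in_def)
  then show ?thesis using connected_in_insert_edge[OF assms(1,2)] by blast
qed

lemma finite_connector_to_nbr:
  assumes "sym E" "connected_in E D" "u \<in> D" "y \<in> nbrs_in E D Y"
  obtains P where "finite P" "P \<subseteq> D" "u \<in> P" "connected_in E P" "y \<in> nbrs_in E P Y"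
proof -
  obtain c where c: "c \<in> D" "(c, y) \<in> E" "y \<in> Y" using assms(4) by (auto simp: nbrs_in_def)
  obtain P where "finite P" "P \<subseteq> D" "u \<in> P" "c \<in> P" "connected_in E P"
    using connected_in_finite_connector[OF assms(1-3) c(1)] .
  then show ?thesis using that c by (auto simp: nbrs_in_def)
qed

section \<open>Cardinality lemmas\<close>

lemma countable_lepoll_infinite: "countable A \<Longrightarrow> infinite X \<Longrightarrow> A \<lesssim> X"
  by (meson countable_def infinite_le_lepoll lepoll_def lepoll_trans subset_UNIV)

lemma UN_lepoll_infinite:
  assumes "infinite X" "I \<lesssim> X" "\<And>i. i \<in> I \<Longrightarrow> A i \<lesssim> X"
  shows "(\<Union>i\<in>I. A i) \<lesssim> X"
  using card_of_UNION_ordLeq_infinite[of X I A] assms unfolding lepoll_def card_of_ordLeq by blast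

primrec closure_steps :: "('a \<Rightarrow> 'a set) \<Rightarrow> 'a set \<Rightarrow> nat \<Rightarrow> 'a set" where
  "closure_steps g S 0 = S"
| "closure_steps g S (Suc n) = (\<Union>x\<in>closure_steps g S n. g x)"

definition closure_under :: "('a \<Rightarrow> 'a set) \<Rightarrow> 'a set \<Rightarrow> 'a set" where
  "closure_under g S = (\<Union>n. closure_steps g S n)"

lemma subset_closure_under: "S \<subseteq> closure_under g S"
  unfolding closure_under_def by (metis UN_upper UNIV_I closure_steps.simps(1))

lemma closure_under_closed:
  assumes "x \<in> closure_under g S"
  shows "g x \<subseteq> closure_under g S"
proof -
  obtain n where "x \<in> closure_steps g S n" using assms by (auto simp: closure_under_def)
  then have "g x \<subseteq> closure_steps g S (Suc n)" by auto
  then show ?thesis unfolding closure_under_def by (meson UN_upper UNIV_I subset_trans)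
qed

lemma closure_steps_subset:
  assumes "S \<subseteq> A" "\<And>x. x \<in> A \<Longrightarrow> g x \<subseteq> A"
  shows "closure_steps g S n \<subseteq> A"
proof (induction n)
  case (Suc n)
  then show ?case using assms(2) by auto
qed (simp add: assms(1))

lemma closure_under_subset:
  assumes "S \<subseteq> A" "\<And>x. x \<in> A \<Longrightarrow> g x \<subseteq> A"
  shows "closure_under g S \<subseteq> A"
proof -
  have "closure_steps g S n \<subseteq> A" for n using assms by (rule closure_steps_subset)
  then show ?thesis by (auto simp: closure_under_def)
qed

lemma countable_closure_under:
  assumes "countable S" "S \<subseteq> A" "\<And>x. x \<in> A \<Longrightarrow> g x \<subseteq> A \<and> countable (g x)"
  shows "countable (closure_under g S)"
proof -
  have "countable (closure_steps g S n)" for n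
  proof (induction n)
    case (Suc n)
    have "closure_steps g S n \<subseteq> A" using closure_steps_subset[of S A g n] assms(2,3) by blast
    then show ?case
      unfolding closure_steps.simps using Suc assms(3) by (blast intro: countable_UN)
  qed (simp add: assms(1))
  then show ?thesis unfolding closure_under_def by (blast intro: countable_UN)
qed

lemma closure_under_lepoll:
  assumes "infinite S" "S \<subseteq> A" "\<And>x. x \<in> A \<Longrightarrow> g x \<subseteq> A \<and> countable (g x)"
  shows "closure_under g S \<lesssim> S"
proof -
  have "closure_steps g S n \<lesssim> S" for n
  proof (induction n)
    case (Suc n)
    have "closure_steps g S n \<subseteq> A" using closure_steps_subset[of S A g n] assms(2,3) by blast
    then have "g x \<lesssim> S" if "x \<in> closure_steps g S n" for x
      using that assms(1,3) countable_lepoll_infinite by blast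
    then show ?case unfolding closure_steps.simps by (rule UN_lepoll_infinite[OF assms(1) Suc])
  qed simp
  moreover have "(UNIV :: nat set) \<lesssim> S" using assms(1) infinite_le_lepoll by blast
  ultimately show ?thesis unfolding closure_under_def by (intro UN_lepoll_infinite[OF assms(1)])
qed

primrec distinct_picks :: "(nat \<Rightarrow> 'a set) \<Rightarrow> nat \<Rightarrow> 'a list" where
  "distinct_picks A 0 = []"
| "distinct_picks A (Suc n) = distinct_picks A n @ [SOME x. x \<in> A n - set (distinct_picks A n)]"

lemma length_distinct_picks [simp]: "length (distinct_picks A n) = n"
  by (induction n) auto

lemma distinct_picks_nth: "i < n \<Longrightarrow> distinct_picks A n ! i = distinct_picks A (Suc i) ! i"
  by (induction n) (auto simp: nth_append less_Suc_eq)

lemma distinct_picks_in: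
  assumes "\<And>n. infinite (A n)"
  shows "distinct (distinct_picks A n) \<and> (\<forall>i<n. distinct_picks A n ! i \<in> A i)"
proof (induction n)
  case (Suc n)
  have "A n - set (distinct_picks A n) \<noteq> {}"
    using Diff_infinite_finite[OF finite_set assms] by (metis finite.emptyI)
  then have "(SOME x. x \<in> A n - set (distinct_picks A n)) \<in> A n - set (distinct_picks A n)"
    using someI_ex[of "\<lambda>x. x \<in> A n - set (distinct_picks A n)"] by blast
  then show ?case using Suc by (auto simp: nth_append less_Suc_eq)
qed simp

lemma injective_choice:
  assumes "\<And>n. infinite (A n)"
  obtains g :: "nat \<Rightarrow> 'a" where "inj g" "\<And>n. g n \<in> A n"
proof -
  define g where "g n = distinct_picks A (Suc n) ! n" for n
  have picks: "distinct (distinct_picks A k) \<and> (\<forall>i<k. distinct_picks A k ! i \<in> A i)" for k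
    using assms by (rule distinct_picks_in)
  have "g n \<in> A n" for n
    using picks[of "Suc n"] by (simp add: g_def)
  moreover have "g m \<noteq> g n" if "m < n" for m n
  proof -
    have "g m = distinct_picks A (Suc n) ! m" using that distinct_picks_nth[of m "Suc n" A]
      by (simp add: g_def)
    moreover have "distinct (distinct_picks A (Suc n))" using picks by blast
    ultimately show ?thesis using that by (simp add: g_def nth_eq_iff_index_eq)
  qed
  then have "inj g" by (metis inj_onI linorder_neqE_nat)
  ultimately show ?thesis using that by blast
qed

lemma uncountable_fiber:
  assumes "uncountable Z" "countable (h ` Z)"
  obtains a where "uncountable {z \<in> Z. h z = a}"
proof -
  have "countable Z" if "\<And>a. countable {z \<in> Z. h z = a}"
  proof -
    have "countable (\<Union>a\<in>h ` Z. {z \<in> Z. h z = a})" using assms(2) that by (rule countable_UN)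
    moreover have "Z = (\<Union>a\<in>h ` Z. {z \<in> Z. h z = a})" by blast
    ultimately show ?thesis by simp
  qed
  then show ?thesis using assms(1) that by blast
qed

lemma uncountable_bipartite_core:
  fixes N :: "'z \<Rightarrow> 'y set"
  assumes "uncountable Z" "countable Y" "\<And>z. z \<in> Z \<Longrightarrow> N z \<subseteq> Y"
  obtains Y' Z' where "Y' \<subseteq> Y" "Z' \<subseteq> Z" "uncountable Z'" "\<And>z. z \<in> Z' \<Longrightarrow> N z \<subseteq> Y'"
    "\<And>y. y \<in> Y' \<Longrightarrow> uncountable {z \<in> Z'. y \<in> N z}"
proof -
  define Y' where "Y' = {y \<in> Y. uncountable {z \<in> Z. y \<in> N z}}"
  define Z' where "Z' = {z \<in> Z. N z \<subseteq> Y'}"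
  have "Z - Z' \<subseteq> (\<Union>y\<in>Y - Y'. {z \<in> Z. y \<in> N z})" using assms(3) by (auto simp: Z'_def Y'_def)
  moreover have "countable (\<Union>y\<in>Y - Y'. {z \<in> Z. y \<in> N z})"
    using assms(2) by (intro countable_UN) (auto simp: Y'_def)
  ultimately have small: "countable (Z - Z')" by (rule countable_subset)
  have "Z' = Z - (Z - Z')" by (auto simp: Z'_def)
  then have "uncountable Z'" using uncountable_minus_countable[OF assms(1) small] by simp
  moreover have "uncountable {z \<in> Z'. y \<in> N z}" if "y \<in> Y'" for y
  proof -
    have "{z \<in> Z'. y \<in> N z} = {z \<in> Z. y \<in> N z} - (Z - Z')" by (auto simp: Z'_def)
    then show ?thesis using that uncountable_minus_countable[OF _ small] by (simp add: Y'_def)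
  qed
  ultimately show ?thesis using that[of Y' Z'] by (auto simp: Y'_def Z'_def)
qed

section \<open>Colouring orders\<close>

definition back_nbrs :: "'a set \<Rightarrow> ('a \<times> 'a) set \<Rightarrow> ('a \<times> 'a) set \<Rightarrow> 'a \<Rightarrow> 'a set" where
  "back_nbrs V F r x = {y \<in> V. (y, x) \<in> r \<and> y \<noteq> x \<and> (y, x) \<in> F}"

lemma exists_later_nbr:
  assumes "total_on V r" "x \<in> V" "N \<subseteq> V" "infinite N" "finite (back_nbrs V F r x)"
    "\<And>y. y \<in> N \<Longrightarrow> (y, x) \<in> F \<and> y \<noteq> x"
  obtains y where "y \<in> N" "(x, y) \<in> r"
proof -
  have "infinite (N - back_nbrs V F r x)" using Diff_infinite_finite[OF assms(5,4)] .
  then obtain y where y: "y \<in> N" "y \<notin> back_nbrs V F r x" using infinite_imp_nonempty by blast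
  then have "(y, x) \<notin> r" "y \<noteq> x" "y \<in> V" using assms(3,6) by (auto simp: back_nbrs_def)
  then have "(x, y) \<in> r" using assms(1,2) by (auto simp: total_on_def)
  then show ?thesis using that y(1) by blast
qed

text \<open>Pigeonhole: each \<open>z\<close> has an attached \<open>a\<close> coming later, and uncountably many \<open>z\<close>
  choose the same \<open>a\<close>, which then has infinitely many earlier neighbours.\<close>

lemma infinite_back_nbrs_if_uncountably_attached:
  assumes "total_on V r" "sym F" "A \<subseteq> V" "countable A" "Z \<subseteq> V" "uncountable Z" "A \<inter> Z = {}"
    "\<forall>z\<in>Z. infinite {a \<in> A. (a, z) \<in> F}"
  shows "\<exists>x\<in>V. infinite (back_nbrs V F r x)"
proof -
  have False if fin: "\<And>x. x \<in> V \<Longrightarrow> finite (back_nbrs V F r x)"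
  proof -
    have later: "\<exists>a\<in>A. (z, a) \<in> r \<and> (a, z) \<in> F" if z: "z \<in> Z" for z
    proof -
      have zV: "z \<in> V" using assms(5) z by blast
      have sub: "{a \<in> A. (a, z) \<in> F} \<subseteq> V" using assms(3) by blast
      have nbr: "(a, z) \<in> F \<and> a \<noteq> z" if "a \<in> {a \<in> A. (a, z) \<in> F}" for a
        using that z assms(7) by blast
      obtain a where "a \<in> {a \<in> A. (a, z) \<in> F}" "(z, a) \<in> r"
        by (rule exists_later_nbr[OF assms(1) zV sub assms(8)[rule_format, OF z] fin[OF zV] nbr])
      then show ?thesis by blast
    qed
    obtain h where h: "\<And>z. z \<in> Z \<Longrightarrow> h z \<in> A \<and> (z, h z) \<in> r \<and> (h z, z) \<in> F"
      using later by metis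
    then have "countable (h ` Z)" using countable_subset[OF _ assms(4)] by blast
    then obtain a where fiber: "uncountable {z \<in> Z. h z = a}" using uncountable_fiber[OF assms(6)] by blast
    then have "{z \<in> Z. h z = a} \<noteq> {}" by (metis countable_empty)
    then have "a \<in> V" using h assms(3) by blast
    have "{z \<in> Z. h z = a} \<subseteq> back_nbrs V F r a"
      using h assms(2,5,7) by (fastforce simp: back_nbrs_def dest: symD)
    then have "finite {z \<in> Z. h z = a}" using fin[OF \<open>a \<in> V\<close>] finite_subset by blast
    then show False using fiber countable_finite by blast
  qed
  then show ?thesis by blast
qed

section \<open>Rooted minors given by models\<close>

text \<open>The graph \<open>(I, H)\<close> is a \<open>U\<close>-rooted minor of \<open>G\<close> with branch sets \<open>br i\<close>; unlike
  \<^const>\<open>rooted_minor\<close>, the minor is not identified with its set of branch sets.\<close>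

definition rooted_model ::
  "'v set \<Rightarrow> ('v \<times> 'v) set \<Rightarrow> 'v set \<Rightarrow> 'i set \<Rightarrow> ('i \<Rightarrow> 'v set) \<Rightarrow> ('i \<times> 'i) set \<Rightarrow> bool" where
  "rooted_model VG E U I br H \<longleftrightarrow>
     (\<forall>i\<in>I. br i \<subseteq> VG \<and> connected_in E (br i) \<and> br i \<inter> U \<noteq> {}) \<and>
     (\<forall>i\<in>I. \<forall>j\<in>I. i \<noteq> j \<longrightarrow> br i \<inter> br j = {}) \<and> graph I H \<and>
     (\<forall>(i, j)\<in>H. \<exists>x\<in>br i. \<exists>y\<in>br j. (x, y) \<in> E)"

lemma rooted_model_inj_on:
  assumes "rooted_model VG E U I br H"
  shows "inj_on br I"
proof (rule inj_onI, rule ccontr)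
  fix i j assume ij: "i \<in> I" "j \<in> I" "br i = br j" "i \<noteq> j"
  then have "br i \<inter> br j = {}" "br i \<inter> U \<noteq> {}" using assms unfolding rooted_model_def by blast+
  with ij(3) show False by blast
qed

lemma rooted_minor_of_model:
  assumes "rooted_model VG E U I br H"
  shows "rooted_minor VG E U (br ` I) (map_prod br br ` H)"
proof -
  have inj: "inj_on br I" using assms by (rule rooted_model_inj_on)
  have H: "H \<subseteq> I \<times> I" "sym H" "irrefl H" using assms by (auto simp: rooted_model_def graph_def)
  have "graph (br ` I) (map_prod br br ` H)"
    unfolding graph_def
  proof (intro conjI)
    show "map_prod br br ` H \<subseteq> br ` I \<times> br ` I" using H(1) by auto
    show "sym (map_prod br br ` H)" using H(2) by (auto simp: sym_def)
    show "irrefl (map_prod br br ` H)" using H(1,3) inj by (auto simp: irrefl_def inj_on_def)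
  qed
  moreover have "pairwise disjnt (br ` I)"
    using assms by (auto simp: rooted_model_def disjnt_def intro!: pairwise_imageI)
  ultimately show ?thesis
    using assms by (auto simp: rooted_minor_def minor_by_branch_sets_def rooted_model_def)
qed

lemma model_ccn_total_order:
  assumes "inj_on br I" "countable_colouring_number (br ` I) (map_prod br br ` H)"
  shows "\<exists>r. total_on I r \<and> (\<forall>i\<in>I. finite (back_nbrs I H r i))"
proof -
  obtain s where s: "well_order_on (br ` I) s"
    "\<And>x. x \<in> br ` I \<Longrightarrow> finite (back_nbrs (br ` I) (map_prod br br ` H) s x)"
    using assms(2) by (auto simp: countable_colouring_number_def back_nbrs_def)
  define r where "r = {(i, j). (br i, br j) \<in> s}"
  have "total_on I r"
    using s(1) assms(1)
    by (auto simp: well_order_on_def linear_order_on_def total_on_def r_def inj_on_def)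
  moreover have "finite (back_nbrs I H r i)" if i: "i \<in> I" for i
  proof -
    have "br ` back_nbrs I H r i \<subseteq> back_nbrs (br ` I) (map_prod br br ` H) s (br i)"
      using assms(1) i by (auto simp: back_nbrs_def r_def inj_on_def)
    then have "finite (br ` back_nbrs I H r i)" using s(2) i finite_subset by blast
    then show ?thesis
      by (rule finite_imageD) (rule inj_on_subset[OF assms(1)], auto simp: back_nbrs_def)
  qed
  ultimately show ?thesis by blast
qed

definition attachment_edges ::
  "(nat \<Rightarrow> 'y) \<Rightarrow> ('z \<Rightarrow> 'y set) \<Rightarrow> 'z set \<Rightarrow> ((nat + 'z) \<times> (nat + 'z)) set" where
  "attachment_edges e N Z =
     {(Inl n, Inr z) | n z. z \<in> Z \<and> e n \<in> N z} \<union> {(Inr z, Inl n) | n z. z \<in> Z \<and> e n \<in> N z}"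

locale simple_graph =
  fixes VG :: "'v set" and E :: "('v \<times> 'v) set"
  assumes graph: "graph VG E"
begin

lemma sym_E: "sym E" and E_subset: "E \<subseteq> VG \<times> VG"
  using graph by (simp_all add: graph_def)

lemma rooted_connectors:
  assumes "\<forall>z\<in>Z. connected_in E (D z) \<and> D z \<inter> U \<noteq> {}"
  shows "\<exists>u P. \<forall>z\<in>Z. u z \<in> D z \<inter> U \<and> (\<forall>y\<in>nbrs_in E (D z) Y.
           finite (P z y) \<and> P z y \<subseteq> D z \<and> u z \<in> P z y \<and> connected_in E (P z y) \<and>
           y \<in> nbrs_in E (P z y) Y)"
proof -
  define u where "u z = (SOME x. x \<in> D z \<inter> U)" for z
  have u: "u z \<in> D z \<inter> U" if "z \<in> Z" for z
    unfolding u_def using assms that by (metis some_in_eq)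
  define P where "P z y = (SOME P. finite P \<and> P \<subseteq> D z \<and> u z \<in> P \<and> connected_in E P \<and>
                                  y \<in> nbrs_in E P Y)" for z y
  have "finite (P z y) \<and> P z y \<subseteq> D z \<and> u z \<in> P z y \<and> connected_in E (P z y) \<and>
           y \<in> nbrs_in E (P z y) Y" if z: "z \<in> Z" and y: "y \<in> nbrs_in E (D z) Y" for z y
  proof -
    obtain Q where "finite Q" "Q \<subseteq> D z" "u z \<in> Q" "connected_in E Q" "y \<in> nbrs_in E Q Y"
      using finite_connector_to_nbr[OF sym_E _ _ y] assms u[OF z] z by blast
    then have "\<exists>Q. finite Q \<and> Q \<subseteq> D z \<and> u z \<in> Q \<and> connected_in E Q \<and> y \<in> nbrs_in E Q Y"
      by blast
    then show ?thesis unfolding P_def by (rule someI_ex)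
  qed
  then show ?thesis using u by blast
qed

end

locale rooted_minor_ccn = simple_graph VG E for VG :: "'v set" and E +
  fixes U :: "'v set"
  assumes minors_ccn: "\<forall>B F. rooted_minor VG E U B F \<and> (\<forall>b\<in>B. countable b)
                       \<longrightarrow> countable_colouring_number B F"
begin

lemma model_total_order:
  assumes "rooted_model VG E U I br H" "\<forall>i\<in>I. countable (br i)"
  shows "\<exists>r. total_on I r \<and> (\<forall>i\<in>I. finite (back_nbrs I H r i))"
proof -
  have "countable_colouring_number (br ` I) (map_prod br br ` H)"
    using minors_ccn rooted_minor_of_model[OF assms(1)] assms(2) by blast
  then show ?thesis using model_ccn_total_order[OF rooted_model_inj_on[OF assms(1)]] by blast
qed

text \<open>The minor refuting an uncountable family \<open>D\<close> attached to an enumeration \<open>e\<close> of \<open>Y\<close>: node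
  \<open>Inl n\<close> is \<open>e n\<close> plus a finite connector in \<open>D (g n)\<close>, node \<open>Inr z\<close> for \<open>z\<close> outside the range of
  \<open>g\<close> is the union of finite connectors from a root of \<open>D z\<close> to all its attachments.\<close>

lemma attachment_model:
  fixes D :: "'z \<Rightarrow> 'v set"
  assumes D: "\<forall>z\<in>Z. D z \<subseteq> VG - Y \<and> connected_in E (D z) \<and> D z \<inter> U \<noteq> {} \<and>
                         nbrs_in E (D z) Y \<noteq> {}"
    and disj: "\<forall>z\<in>Z. \<forall>z'\<in>Z. z \<noteq> z' \<longrightarrow> D z \<inter> D z' = {}"
    and Y: "countable Y" and e: "inj e" and g: "inj g" "\<forall>n. g n \<in> Z \<and> e n \<in> nbrs_in E (D (g n)) Y"
    and Z': "Z' \<subseteq> Z - range g"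
  shows "\<exists>br. rooted_model VG E U (range Inl \<union> Inr ` Z') br
                (attachment_edges e (\<lambda>z. nbrs_in E (D z) Y) Z') \<and>
              (\<forall>i\<in>range Inl \<union> Inr ` Z'. countable (br i))"
proof -
  let ?N = "\<lambda>z. nbrs_in E (D z) Y"
  let ?I = "range Inl \<union> Inr ` Z' :: (nat + 'z) set"
  obtain u P where uP: "\<forall>z\<in>Z. u z \<in> D z \<inter> U \<and> (\<forall>y\<in>?N z.
      finite (P z y) \<and> P z y \<subseteq> D z \<and> u z \<in> P z y \<and> connected_in E (P z y) \<and>
      y \<in> nbrs_in E (P z y) Y)"
  proof -
    have "\<forall>z\<in>Z. connected_in E (D z) \<and> D z \<inter> U \<noteq> {}" using D by blast
    from rooted_connectors[OF this, of Y] show ?thesis using that by blast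
  qed
  have u: "u z \<in> D z \<inter> U" if "z \<in> Z" for z using uP that by blast
  have P: "finite (P z y) \<and> P z y \<subseteq> D z \<and> u z \<in> P z y \<and> connected_in E (P z y) \<and>
      y \<in> nbrs_in E (P z y) Y" if "z \<in> Z" "y \<in> ?N z" for z y
    using uP that by blast
  define br where "br = case_sum (\<lambda>n. insert (e n) (P (g n) (e n))) (\<lambda>z. \<Union>y\<in>?N z. P z y)"
  define owner where "owner = case_sum g id"
  define extra :: "nat + 'z \<Rightarrow> 'v set" where "extra = case_sum (\<lambda>n. {e n}) (\<lambda>z. {})"
  have owner: "owner i \<in> Z \<and> extra i \<subseteq> Y \<inter> VG \<and> br i \<subseteq> extra i \<union> D (owner i)"
    if "i \<in> ?I" for i
  proof (cases i)
    case (Inl n)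
    have "g n \<in> Z" "e n \<in> ?N (g n)" using g(2) by auto
    then have "P (g n) (e n) \<subseteq> D (g n)" "e n \<in> Y \<inter> VG"
      using P E_subset by (auto simp: nbrs_in_def)
    then show ?thesis using Inl \<open>g n \<in> Z\<close> by (auto simp: owner_def extra_def br_def)
  next
    case (Inr z)
    then have "z \<in> Z" using that Z' by auto
    then show ?thesis using Inr P by (auto simp: owner_def extra_def br_def)
  qed
  have apart: "owner i \<noteq> owner j \<and> extra i \<inter> extra j = {}" if "i \<in> ?I" "j \<in> ?I" "i \<noteq> j" for i j
    using that Z' e g(1) by (auto simp: owner_def extra_def inj_def)
  have conn: "connected_in E (br i) \<and> br i \<inter> U \<noteq> {} \<and> countable (br i)" if "i \<in> ?I" for i
  proof (cases i)
    case (Inl n)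
    have gn: "g n \<in> Z" "e n \<in> ?N (g n)" using g(2) by auto
    note Pn = P[OF gn]
    then have "connected_in E (insert (e n) (P (g n) (e n)))"
      using connected_in_insert_nbr[OF sym_E] by blast
    then show ?thesis using Inl Pn u[OF gn(1)] by (auto simp: br_def countable_finite)
  next
    case (Inr z)
    then have z: "z \<in> Z" "?N z \<noteq> {}" using that Z' D by auto
    have Pz: "finite (P z y) \<and> u z \<in> P z y \<and> connected_in E (P z y)" if "y \<in> ?N z" for y
      using P[OF z(1) that] by blast
    have "connected_in E (br i)"
      unfolding Inr br_def sum.case by (rule connected_in_UN[OF sym_E z(2)]) (use Pz in blast)
    moreover have "u z \<in> br i" using Inr z(2) Pz by (auto simp: br_def)
    moreover have "countable (?N z)" using Y by (auto simp: nbrs_in_def intro: countable_subset)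
    then have "countable (br i)" unfolding Inr br_def using Pz by (auto intro: countable_finite)
    ultimately show ?thesis using u[OF z(1)] by blast
  qed
  have edges: "(\<exists>x\<in>br (Inl n). \<exists>y\<in>br (Inr z). (x, y) \<in> E) \<and>
                (\<exists>x\<in>br (Inr z). \<exists>y\<in>br (Inl n). (x, y) \<in> E)"
    if z: "z \<in> Z'" and en: "e n \<in> ?N z" for n z
  proof -
    have "z \<in> Z" using z Z' by blast
    then obtain c where "c \<in> P z (e n)" "(c, e n) \<in> E"
      using P[OF _ en] by (auto simp: nbrs_in_def)
    then have "c \<in> br (Inr z)" "e n \<in> br (Inl n)" "(e n, c) \<in> E"
      using en sym_E by (auto simp: br_def dest: symD)
    then show ?thesis using \<open>(c, e n) \<in> E\<close> by blast
  qed
  have disjoint: "br i \<inter> br j = {}" if i: "i \<in> ?I" and j: "j \<in> ?I" and "i \<noteq> j" for i j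
  proof -
    have oi: "owner i \<in> Z" and oj: "owner j \<in> Z" using owner[OF i] owner[OF j] by blast+
    have "D (owner i) \<inter> D (owner j) = {}" using disj[rule_format, OF oi oj] apart[OF i j \<open>i \<noteq> j\<close>] by blast
    moreover have "D (owner i) \<inter> Y = {}" "D (owner j) \<inter> Y = {}" using D[rule_format, OF oi] D[rule_format, OF oj] by blast+
    ultimately show ?thesis using owner[OF i] owner[OF j] apart[OF i j \<open>i \<noteq> j\<close>] by blast
  qed
  have "rooted_model VG E U ?I br (attachment_edges e ?N Z')"
    unfolding rooted_model_def
  proof (intro conjI)
    show "\<forall>i\<in>?I. br i \<subseteq> VG \<and> connected_in E (br i) \<and> br i \<inter> U \<noteq> {}"
    proof
      fix i assume i: "i \<in> ?I"
      have "D (owner i) \<subseteq> VG" using D owner[OF i] by blast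
      then show "br i \<subseteq> VG \<and> connected_in E (br i) \<and> br i \<inter> U \<noteq> {}"
        using owner[OF i] conn[OF i] by blast
    qed
    show "\<forall>i\<in>?I. \<forall>j\<in>?I. i \<noteq> j \<longrightarrow> br i \<inter> br j = {}" using disjoint by blast
    show "graph ?I (attachment_edges e ?N Z')"
      by (auto simp: graph_def attachment_edges_def sym_def irrefl_def)
    show "\<forall>(i, j)\<in>attachment_edges e ?N Z'. \<exists>x\<in>br i. \<exists>y\<in>br j. (x, y) \<in> E"
      using edges by (auto simp: attachment_edges_def)
  qed
  then show ?thesis using conn by blast
qed

lemma no_uncountable_saturated_attachments:
  fixes D :: "'z \<Rightarrow> 'v set"
  assumes Y: "countable Y" and Z: "uncountable Z"
    and D: "\<And>z. z \<in> Z \<Longrightarrow> D z \<subseteq> VG - Y \<and> connected_in E (D z) \<and> D z \<inter> U \<noteq> {} \<and>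
                            infinite (nbrs_in E (D z) Y)"
    and disj: "\<And>z z'. z \<in> Z \<Longrightarrow> z' \<in> Z \<Longrightarrow> z \<noteq> z' \<Longrightarrow> D z \<inter> D z' = {}"
    and saturated: "\<And>y. y \<in> Y \<Longrightarrow> infinite {z \<in> Z. y \<in> nbrs_in E (D z) Y}"
  shows False
proof -
  define N where "N z = nbrs_in E (D z) Y" for z
  have "Z \<noteq> {}" using Z by auto
  then obtain z0 where "z0 \<in> Z" by blast
  moreover have "N z0 \<subseteq> Y" by (auto simp: N_def nbrs_in_def)
  ultimately have "infinite Y" using D finite_subset unfolding N_def by blast
  then have "bij_betw (from_nat_into Y) UNIV Y" using Y by (simp add: bij_betw_from_nat_into)
  then obtain e :: "nat \<Rightarrow> 'v" where e: "inj e" "range e = Y" by (auto simp: bij_betw_def)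
  have "infinite {z \<in> Z. e n \<in> N z}" for n using saturated[of "e n"] e(2) by (auto simp: N_def)
  then obtain g where g: "inj g" "\<And>n. g n \<in> {z \<in> Z. e n \<in> N z}"
    using injective_choice[of "\<lambda>n. {z \<in> Z. e n \<in> N z}"] by blast
  define Z' where "Z' = Z - range g"
  have Z': "uncountable Z'" unfolding Z'_def using Z by (simp add: uncountable_minus_countable)
  let ?I = "range Inl \<union> Inr ` Z' :: (nat + 'z) set"
  let ?H = "attachment_edges e (\<lambda>z. nbrs_in E (D z) Y) Z'"
  have "\<forall>z\<in>Z. D z \<subseteq> VG - Y \<and> connected_in E (D z) \<and> D z \<inter> U \<noteq> {} \<and> N z \<noteq> {}"
    using D unfolding N_def by (metis finite.emptyI)
  moreover have "\<forall>z\<in>Z. \<forall>z'\<in>Z. z \<noteq> z' \<longrightarrow> D z \<inter> D z' = {}" using disj by blast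
  moreover have "\<forall>n. g n \<in> Z \<and> e n \<in> N (g n)" using g(2) by blast
  moreover have "Z' \<subseteq> Z - range g" by (simp add: Z'_def)
  ultimately obtain br where model: "rooted_model VG E U ?I br ?H"
    and cnt: "\<forall>i\<in>?I. countable (br i)"
    using attachment_model[of Z D Y e g Z'] Y e(1) g(1) unfolding N_def by blast
  obtain r where r: "total_on ?I r" "\<forall>i\<in>?I. finite (back_nbrs ?I ?H r i)"
    using model_total_order[OF model cnt] by blast
  have attached: "\<forall>x\<in>Inr ` Z'. infinite {a \<in> range Inl. (a, x) \<in> ?H}"
  proof
    fix x :: "nat + 'z" assume "x \<in> Inr ` Z'"
    then obtain z where z: "z \<in> Z'" "x = Inr z" by blast
    have "e ` {n. e n \<in> N z} = N z" using e(2) by (auto simp: N_def nbrs_in_def)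
    then have "infinite {n. e n \<in> N z}" using D[of z] z unfolding Z'_def N_def by (metis DiffD1 finite_imageI)
    then have "infinite (Inl ` {n. e n \<in> N z} :: (nat + 'z) set)"
      using finite_imageD inj_on_subset[OF inj_Inl] by blast
    moreover have "{a \<in> range Inl. (a, x) \<in> ?H} = Inl ` {n. e n \<in> N z}"
      using z by (auto simp: attachment_edges_def N_def)
    ultimately show "infinite {a \<in> range Inl. (a, x) \<in> ?H}" by simp
  qed
  have "sym ?H" by (auto simp: sym_def attachment_edges_def)
  moreover have "uncountable (Inr ` Z' :: (nat + 'z) set)"
    using Z' countable_image_inj_on inj_on_subset[OF inj_Inr] by blast
  ultimately have "\<exists>x\<in>?I. infinite (back_nbrs ?I ?H r x)"
    using infinite_back_nbrs_if_uncountably_attached[OF r(1) _ _ _ _ _ _ attached] by blast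
  then show False using r(2) by blast
qed

lemma countable_if_infinitely_attached:
  fixes D :: "'z \<Rightarrow> 'v set"
  assumes Y: "countable Y"
    and D: "\<And>z. z \<in> Z \<Longrightarrow> D z \<subseteq> VG - Y \<and> connected_in E (D z) \<and> D z \<inter> U \<noteq> {} \<and>
                            infinite (nbrs_in E (D z) Y)"
    and disj: "\<And>z z'. z \<in> Z \<Longrightarrow> z' \<in> Z \<Longrightarrow> z \<noteq> z' \<Longrightarrow> D z \<inter> D z' = {}"
  shows "countable Z"
proof (rule ccontr)
  assume "uncountable Z"
  define N where "N z = nbrs_in E (D z) Y" for z
  have Nsub: "\<And>z. z \<in> Z \<Longrightarrow> N z \<subseteq> Y" by (auto simp: N_def nbrs_in_def)
  obtain Y' Z' where core: "Y' \<subseteq> Y" "Z' \<subseteq> Z" "uncountable Z'" "\<And>z. z \<in> Z' \<Longrightarrow> N z \<subseteq> Y'"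
    "\<And>y. y \<in> Y' \<Longrightarrow> uncountable {z \<in> Z'. y \<in> N z}"
    using uncountable_bipartite_core[of Z Y N, OF \<open>uncountable Z\<close> Y Nsub] by blast
  have N': "nbrs_in E (D z) Y' = N z" if "z \<in> Z'" for z
    using core(1) core(4)[OF that] by (auto simp: N_def nbrs_in_def)
  show False
  proof (rule no_uncountable_saturated_attachments)
    show "countable Y'" using countable_subset[OF core(1) Y] .
    show "uncountable Z'" by (fact core(3))
    show "D z \<subseteq> VG - Y' \<and> connected_in E (D z) \<and> D z \<inter> U \<noteq> {} \<and> infinite (nbrs_in E (D z) Y')"
      if "z \<in> Z'" for z
    proof -
      have "z \<in> Z" using that core(2) by blast
      then show ?thesis using D[of z] core(1) N'[OF that] by (auto simp: N_def)
    qed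
    show "D z \<inter> D z' = {}" if "z \<in> Z'" "z' \<in> Z'" "z \<noteq> z'" for z z'
      using disj that core(2) by blast
    show "infinite {z \<in> Z'. y \<in> nbrs_in E (D z) Y'}" if "y \<in> Y'" for y
    proof -
      have "{z \<in> Z'. y \<in> nbrs_in E (D z) Y'} = {z \<in> Z'. y \<in> N z}" using N' by auto
      then show ?thesis using core(5)[OF that] uncountable_infinite by simp
    qed
  qed
qed

end

section \<open>Order trees\<close>

locale tree_order =
  fixes T :: "'t set" and le :: "('t \<times> 't) set"
  assumes order_tree: "order_tree T le"
begin

lemma le_in_T: "(s, t) \<in> le \<Longrightarrow> s \<in> T \<and> t \<in> T"
  using order_tree by (auto simp: order_tree_def)

lemma le_refl: "t \<in> T \<Longrightarrow> (t, t) \<in> le"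
  using order_tree by (auto simp: order_tree_def partial_order_on_def preorder_on_def refl_on_def)

lemma le_trans: "(r, s) \<in> le \<Longrightarrow> (s, t) \<in> le \<Longrightarrow> (r, t) \<in> le"
  using order_tree unfolding order_tree_def partial_order_on_def preorder_on_def trans_def by blast

lemma le_antisym: "(s, t) \<in> le \<Longrightarrow> (t, s) \<in> le \<Longrightarrow> s = t"
  using order_tree unfolding order_tree_def partial_order_on_def antisym_def by blast

lemma sdown_iff: "s \<in> sdown T le t \<longleftrightarrow> (s, t) \<in> le \<and> s \<noteq> t"
  using le_in_T by (auto simp: sdown_def)

lemma down_iff: "s \<in> down T le t \<longleftrightarrow> (s, t) \<in> le"
  using le_in_T by (auto simp: down_def)

lemma comparable_below:
  assumes "(r, t) \<in> le" "(s, t) \<in> le"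
  shows "comparable le r s"
proof -
  have "t \<in> T" using assms(1) le_in_T by blast
  then have "total_on (down T le t) (Restr le (down T le t))"
    using order_tree by (simp add: order_tree_def well_order_on_def linear_order_on_def)
  moreover have "r \<in> down T le t" "s \<in> down T le t" using assms by (simp_all add: down_iff)
  ultimately show ?thesis
    using le_refl le_in_T assms(1) unfolding comparable_def total_on_def by (cases "r = s") auto
qed

lemma minimal_element:
  assumes "x \<in> Q"
  obtains z where "z \<in> Q" "\<And>y. y \<in> sdown T le z \<Longrightarrow> y \<notin> Q"
proof (cases "x \<in> T")
  case False
  then show ?thesis using that assms by (auto simp: sdown_def dest: le_in_T)
next
  case True
  let ?D = "down T le x"
  have "wf (Restr le ?D - Id)" using order_tree True by (simp add: order_tree_def well_order_on_def)
  moreover have "x \<in> Q \<inter> ?D" using assms True le_refl by (simp add: down_iff)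
  ultimately obtain z where z: "z \<in> Q \<inter> ?D" "\<And>y. (y, z) \<in> Restr le ?D - Id \<Longrightarrow> y \<notin> Q \<inter> ?D"
    by (metis wfE_min)
  have "y \<notin> Q" if "y \<in> sdown T le z" for y
  proof -
    have "(y, z) \<in> le" "y \<noteq> z" using that by (simp_all add: sdown_iff)
    moreover have "(y, x) \<in> le" using le_trans[OF calculation(1)] z(1) by (simp add: down_iff)
    ultimately show ?thesis using z by (auto simp: down_iff)
  qed
  then show ?thesis using that z(1) by blast
qed

lemma sdown_induct [consumes 1, case_names step]:
  assumes "t \<in> T" "\<And>t. t \<in> T \<Longrightarrow> (\<And>s. s \<in> sdown T le t \<Longrightarrow> P s) \<Longrightarrow> P t"
  shows "P t"
proof (rule ccontr)
  assume "\<not> P t"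
  then have "t \<in> {t \<in> T. \<not> P t}" using assms(1) by blast
  then obtain z where z: "z \<in> {t \<in> T. \<not> P t}" and min: "\<And>y. y \<in> sdown T le z \<Longrightarrow> y \<notin> {t \<in> T. \<not> P t}"
    by (rule minimal_element) blast
  have "P z"
  proof (rule assms(2))
    show "z \<in> T" using z by blast
    show "P s" if "s \<in> sdown T le z" for s using min[OF that] that by (auto simp: sdown_def)
  qed
  then show False using z by blast
qed

lemma root_below:
  assumes "t \<in> T" "sdown T le t = {}" "x \<in> T"
  shows "(t, x) \<in> le"
proof -
  have "x \<in> down T le x" using assms(3) le_refl by (simp add: down_iff)
  then obtain z where z: "z \<in> down T le x" "\<And>y. y \<in> sdown T le z \<Longrightarrow> y \<notin> down T le x"
    by (rule minimal_element) blast
  have zx: "(z, x) \<in> le" using z(1) by (simp add: down_iff)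
  have "y \<notin> sdown T le z" for y
  proof
    assume y: "y \<in> sdown T le z"
    then have "(y, z) \<in> le" by (simp add: sdown_iff)
    then have "(y, x) \<in> le" using zx by (rule le_trans)
    then show False using z(2)[OF y] by (simp add: down_iff)
  qed
  then have "z \<in> T \<and> (\<forall>s\<in>T. (s, z) \<in> le \<longrightarrow> s = z)" using le_in_T[OF zx] by (metis sdown_iff)
  moreover have "t \<in> T \<and> (\<forall>s\<in>T. (s, t) \<in> le \<longrightarrow> s = t)" using assms(1,2) by (metis empty_iff sdown_iff)
  moreover have "\<exists>!r. r \<in> T \<and> (\<forall>s\<in>T. (s, r) \<in> le \<longrightarrow> s = r)"
    using order_tree by (simp add: order_tree_def)
  ultimately have "z = t" by (metis (no_types, lifting))
  then show ?thesis using zx by simp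
qed

lemma finite_chain_has_max:
  assumes "finite N" "N \<noteq> {}" "\<forall>n\<in>N. (n, d) \<in> le"
  shows "\<exists>m\<in>N. \<forall>n\<in>N. (n, m) \<in> le"
  using assms
proof (induction N rule: finite_ne_induct)
  case (singleton x)
  then show ?case using le_in_T le_refl by blast
next
  case (insert x N)
  then obtain m where m: "m \<in> N" "\<forall>n\<in>N. (n, m) \<in> le" by blast
  have "comparable le x m" using comparable_below[of x d m] insert(5) m(1) by simp
  then show ?case
  proof (unfold comparable_def, elim disjE)
    assume mx: "(m, x) \<in> le"
    have "(n, x) \<in> le" if "n \<in> insert x N" for n
      using that le_refl le_in_T[OF mx] le_trans[OF _ mx] m(2) by blast
    then show ?thesis by blast
  qed (use m in blast)
qed

definition limit_node :: "'t \<Rightarrow> bool" where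
  "limit_node t \<longleftrightarrow> sdown T le t \<noteq> {} \<and>
     (\<forall>i\<in>sdown T le t. \<exists>j\<in>sdown T le t. (i, j) \<in> le \<and> i \<noteq> j)"

lemma successor_or_limit:
  assumes "sdown T le t \<noteq> {}"
  shows "limit_node t \<or> (\<exists>s\<in>T. sdown T le t = down T le s)"
proof (cases "\<exists>s\<in>sdown T le t. \<forall>s'\<in>sdown T le t. (s', s) \<in> le")
  case True
  then obtain s where s: "s \<in> sdown T le t" "\<forall>s'\<in>sdown T le t. (s', s) \<in> le" by blast
  have "down T le s \<subseteq> sdown T le t"
  proof
    fix y assume "y \<in> down T le s"
    then have ys: "(y, s) \<in> le" by (simp add: down_iff)
    have st: "(s, t) \<in> le" "s \<noteq> t" using s(1) by (simp_all add: sdown_iff)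
    have "(y, t) \<in> le" using le_trans[OF ys st(1)] .
    moreover have "y \<noteq> t" using ys st le_antisym by blast
    ultimately show "y \<in> sdown T le t" by (simp add: sdown_iff)
  qed
  moreover have "sdown T le t \<subseteq> down T le s" using s(2) by (auto simp: down_iff)
  ultimately have "sdown T le t = down T le s" by blast
  then show ?thesis using s(1) by (auto simp: sdown_def)
next
  case False
  have "\<exists>j\<in>sdown T le t. (i, j) \<in> le \<and> i \<noteq> j" if i: "i \<in> sdown T le t" for i
  proof -
    obtain j where j: "j \<in> sdown T le t" "(j, i) \<notin> le" using False i by blast
    then have "(i, j) \<in> le" using comparable_below i by (auto simp: sdown_iff comparable_def)
    then show ?thesis using j le_in_T le_refl by blast
  qed
  then show ?thesis using assms by (simp add: limit_node_def)
qed

lemma up_step: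
  assumes "(t, r) \<in> le" "comparable le r r'" "r' \<in> T" "r' \<notin> sdown T le t"
  shows "(t, r') \<in> le"
  using assms(2) unfolding comparable_def
proof
  assume "(r', r) \<in> le"
  then have "comparable le t r'" using comparable_below assms(1) by blast
  then show ?thesis using assms(3,4) le_refl by (auto simp: comparable_def sdown_iff)
qed (rule le_trans[OF assms(1)])

lemma min_outside_subtree:
  assumes "rooted_subtree T le S" "q \<in> T - S"
  obtains t where "t \<in> T - S" "(t, q) \<in> le" "sdown T le t \<subseteq> S"
proof -
  have "q \<in> {t \<in> T - S. (t, q) \<in> le}" using assms(2) le_refl by blast
  then obtain t where t: "t \<in> {t \<in> T - S. (t, q) \<in> le}"
    and min: "\<And>y. y \<in> sdown T le t \<Longrightarrow> y \<notin> {t \<in> T - S. (t, q) \<in> le}"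
    by (rule minimal_element) blast
  have "sdown T le t \<subseteq> S"
  proof
    fix y assume y: "y \<in> sdown T le t"
    then have "(y, t) \<in> le" "y \<in> T" by (auto simp: sdown_def)
    then have "(y, q) \<in> le" "y \<in> T" using le_trans[OF _ ] t by blast+
    then show "y \<in> S" using min[OF y] by blast
  qed
  then show ?thesis using that t by blast
qed

lemma sdown_eq_subtree:
  assumes "rooted_subtree T le S" "sdown T le d \<subseteq> S" "d \<in> T - S" "\<And>i. i \<in> S \<Longrightarrow> comparable le i d"
  shows "sdown T le d = S"
proof
  show "S \<subseteq> sdown T le d"
  proof
    fix i assume i: "i \<in> S"
    have "(d, i) \<notin> le" using assms(1,3) i by (auto simp: rooted_subtree_def)
    then show "i \<in> sdown T le d"
      using assms(3) assms(4)[OF i] i by (auto simp: comparable_def sdown_iff)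
  qed
qed (rule assms(2))

lemma countable_closed_subchain:
  assumes K: "rooted_subtree T le K" "k0 \<in> K" "\<forall>k\<in>K. countable (down T le k)"
    and nomax: "\<forall>k\<in>K. \<exists>k'\<in>K. (k, k') \<in> le \<and> k \<noteq> k'"
    and h: "\<forall>k\<in>K. h k \<subseteq> K \<and> countable (h k)"
  shows "\<exists>I\<subseteq>K. countable I \<and> k0 \<in> I \<and> rooted_subtree T le I \<and>
           (\<forall>i\<in>I. \<exists>j\<in>I. (i, j) \<in> le \<and> i \<noteq> j) \<and> (\<forall>i\<in>I. h i \<subseteq> I)"
proof -
  obtain nxt where nxt: "\<forall>k\<in>K. nxt k \<in> K \<and> (k, nxt k) \<in> le \<and> k \<noteq> nxt k" using nomax by metis
  define g where "g k = down T le k \<union> h k \<union> {nxt k}" for k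
  define I where "I = closure_under g {k0}"
  have down_K: "down T le k \<subseteq> K" if "k \<in> K" for k
    using K(1) that by (auto simp: rooted_subtree_def down_def)
  have g: "g k \<subseteq> K \<and> countable (g k)" if "k \<in> K" for k
  proof -
    have "countable (down T le k)" "h k \<subseteq> K" "countable (h k)" "nxt k \<in> K"
      using K(3) h nxt that by auto
    then show ?thesis using down_K[OF that] by (simp add: g_def)
  qed
  have k0: "{k0} \<subseteq> K" using K(2) by blast
  have I_K: "I \<subseteq> K" unfolding I_def by (rule closure_under_subset[OF k0]) (use g in blast)
  have "countable I" unfolding I_def by (rule countable_closure_under[OF _ k0]) (use g in auto)
  have closed: "g i \<subseteq> I" if "i \<in> I" for i
    using that closure_under_closed[of i g "{k0}"] unfolding I_def by blast
  have "k0 \<in> I" unfolding I_def using subset_closure_under[of "{k0}" g] by blast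
  have "rooted_subtree T le I"
    unfolding rooted_subtree_def
  proof (intro conjI ballI impI)
    show "I \<subseteq> T" using I_K K(1) by (auto simp: rooted_subtree_def)
    fix i s assume "i \<in> I" "s \<in> T" "(s, i) \<in> le"
    then have "s \<in> g i" by (simp add: g_def down_def)
    then show "s \<in> I" using closed[OF \<open>i \<in> I\<close>] by blast
  qed
  moreover have "\<exists>j\<in>I. (i, j) \<in> le \<and> i \<noteq> j" if "i \<in> I" for i
    using closed[OF that] nxt I_K that by (auto simp: g_def)
  moreover have "h i \<subseteq> I" if "i \<in> I" for i
    using closed[OF that] by (auto simp: g_def)
  ultimately show ?thesis using I_K \<open>countable I\<close> \<open>k0 \<in> I\<close> by blast
qed

end

section \<open>Normal semi-partition trees\<close>

lemma parts_union_iff: "x \<in> parts_union Vt S \<longleftrightarrow> (\<exists>s\<in>S. x \<in> Vt s)"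
  by (simp add: parts_union_def)

locale semi_partition_tree = simple_graph VG E for VG :: "'v set" and E +
  fixes T :: "'t set" and le :: "('t \<times> 't) set" and Vt :: "'t \<Rightarrow> 'v set"
  assumes nspt: "normal_semi_partition_tree VG E T le Vt"

sublocale semi_partition_tree \<subseteq> tree_order T le
  using nspt by unfold_locales (simp add: normal_semi_partition_tree_def)

context semi_partition_tree
begin

abbreviation contracted :: "('t \<times> 't) set" where
  "contracted \<equiv> contracted_graph E T Vt"

lemma part: "t \<in> T \<Longrightarrow> Vt t \<noteq> {} \<and> Vt t \<subseteq> VG \<and> connected_in E (Vt t)"
  using nspt by (simp add: normal_semi_partition_tree_def)

lemma part_unique: "s \<in> T \<Longrightarrow> t \<in> T \<Longrightarrow> x \<in> Vt s \<Longrightarrow> x \<in> Vt t \<Longrightarrow> s = t"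
  using nspt unfolding normal_semi_partition_tree_def by blast

lemma T_graph_contracted: "T_graph T le contracted"
  using nspt by (simp add: normal_semi_partition_tree_def)

lemma contracted_sym: "(s, t) \<in> contracted \<Longrightarrow> (t, s) \<in> contracted"
  using sym_E unfolding contracted_graph_def by (auto dest: symD)

lemma contracted_cofinal:
  assumes "t \<in> T" "s \<in> sdown T le t"
  obtains u where "(s, u) \<in> le" "u \<in> sdown T le t" "(u, t) \<in> contracted"
  using T_graph_contracted assms unfolding T_graph_def by blast

lemma edge_comparable:
  assumes "s \<in> T" "t \<in> T" "x \<in> Vt s" "y \<in> Vt t" "(x, y) \<in> E"
  shows "comparable le s t"
proof (cases "s = t")
  case True
  then show ?thesis using assms(1) le_refl by (simp add: comparable_def)
next
  case False
  then have "(s, t) \<in> contracted" using assms by (auto simp: contracted_graph_def)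
  then show ?thesis using T_graph_contracted by (auto simp: T_graph_def)
qed

lemma normal_path_comparable:
  assumes "is_path VG E xs" "2 \<le> length xs" "s \<in> T" "t \<in> T" "hd xs \<in> Vt s" "last xs \<in> Vt t"
    "set (butlast (tl xs)) \<inter> parts_union Vt T = {}"
    "successively (\<lambda>x y. \<not> (x \<in> parts_union Vt T \<and> y \<in> parts_union Vt T)) xs"
  shows "comparable le s t"
  using nspt assms unfolding normal_semi_partition_tree_def successively_conv_nth by blast

lemma outside_walk_comparable:
  assumes "r \<in> T" "r' \<in> T" "x \<in> Vt r" "y \<in> Vt r'" "(x, a) \<in> E" "(b, y) \<in> E"
    "(a, b) \<in> (E \<inter> (VG - parts_union Vt T) \<times> (VG - parts_union Vt T))\<^sup>*"
    "a \<in> VG - parts_union Vt T"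
  shows "comparable le r r'"
proof (cases "r = r'")
  case True
  then show ?thesis using assms(1) le_refl by (simp add: comparable_def)
next
  case False
  let ?P = "parts_union Vt T"
  obtain xs where xs: "xs \<noteq> []" "distinct xs" "hd xs = a" "last xs = b"
    "set xs \<subseteq> VG - ?P" "successively (\<lambda>x y. (x, y) \<in> E) xs"
    using rtrancl_Restr_imp_path[OF assms(7)] assms(8) by (metis insert_absorb)
  have xy: "x \<in> ?P" "y \<in> ?P" "x \<in> VG" "y \<in> VG" "x \<noteq> y"
    using assms(1-4) part part_unique False by (auto simp: parts_union_iff)
  let ?ys = "x # xs @ [y]"
  have path: "is_path VG E ?ys"
    unfolding is_path_iff_successively
    using xs xy assms(5,6) by (auto simp: successively_append_iff successively_Cons)
  have "successively (\<lambda>u v. \<not> (u \<in> ?P \<and> v \<in> ?P)) xs"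
    using xs(5) by (induction xs) (auto simp: successively_Cons)
  moreover have "hd xs \<notin> ?P" "last xs \<notin> ?P" using xs(1,5) hd_in_set last_in_set by blast+
  ultimately have "successively (\<lambda>u v. \<not> (u \<in> ?P \<and> v \<in> ?P)) ?ys"
    using xs(1) by (auto simp: successively_append_iff successively_Cons)
  then show ?thesis
    using normal_path_comparable[OF path _ assms(1,2)] assms(3,4) xs(1,5) by auto
qed

lemma infinite_lower_nbrs_if_limit:
  assumes "t \<in> T" "limit_node t"
  shows "infinite {u \<in> sdown T le t. (u, t) \<in> contracted}"
proof
  let ?N = "{u \<in> sdown T le t. (u, t) \<in> contracted}"
  assume fin: "finite ?N"
  obtain i where i: "i \<in> sdown T le t" using assms(2) by (auto simp: limit_node_def)
  obtain u where "u \<in> sdown T le t" "(u, t) \<in> contracted" using contracted_cofinal[OF assms(1) i] by blast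
  then have "?N \<noteq> {}" by blast
  moreover have "\<forall>n\<in>?N. (n, t) \<in> le" by (simp add: sdown_iff)
  ultimately obtain m where m: "m \<in> ?N" "\<forall>n\<in>?N. (n, m) \<in> le"
    using finite_chain_has_max[OF fin] by blast
  then obtain j where j: "j \<in> sdown T le t" "(m, j) \<in> le" "m \<noteq> j"
    using assms(2) by (auto simp: limit_node_def)
  then obtain u' where u': "(j, u') \<in> le" "u' \<in> ?N" using contracted_cofinal[OF assms(1) j(1)] by blast
  have "(j, m) \<in> le" using le_trans[OF u'(1)] m(2) u'(2) by blast
  then show False using j le_antisym by blast
qed

definition interval :: "'t \<Rightarrow> 't \<Rightarrow> 't set" where
  "interval t q = {r \<in> T. (t, r) \<in> le \<and> (r, q) \<in> le}"

lemma part_subset_interval: "(t, r) \<in> le \<Longrightarrow> (r, q) \<in> le \<Longrightarrow> Vt r \<subseteq> parts_union Vt (interval t q)"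
  using le_in_T by (auto simp: interval_def parts_union_def)

lemma interval_mono: "(u, q) \<in> le \<Longrightarrow> interval t u \<subseteq> interval t q"
  using le_trans by (auto simp: interval_def)

lemma interval_parts_reach:
  assumes "(t, q) \<in> le" "x \<in> Vt q" "y \<in> Vt t"
  shows "(y, x) \<in> (E \<inter> parts_union Vt (interval t q) \<times> parts_union Vt (interval t q))\<^sup>*"
proof -
  have "q \<in> T" using assms(1) le_in_T by blast
  then have "\<forall>x\<in>Vt q. (t, q) \<in> le \<longrightarrow>
      (y, x) \<in> (E \<inter> parts_union Vt (interval t q) \<times> parts_union Vt (interval t q))\<^sup>*"
  proof (induction q rule: sdown_induct)
    case (step q)
    show ?case
    proof (intro ballI impI)
      fix x assume x: "x \<in> Vt q" and tq: "(t, q) \<in> le"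
      let ?I = "parts_union Vt (interval t q)"
      have within_q: "(b, x) \<in> (E \<inter> ?I \<times> ?I)\<^sup>*" if "b \<in> Vt q" for b
      proof -
        have "(b, x) \<in> (E \<inter> Vt q \<times> Vt q)\<^sup>*" using part[OF step(1)] that x by (simp add: connected_in_def)
        then show ?thesis by (rule rtrancl_Restr_mono) (rule part_subset_interval[OF tq le_refl[OF step(1)]])
      qed
      show "(y, x) \<in> (E \<inter> ?I \<times> ?I)\<^sup>*"
      proof (cases "t = q")
        case True
        then show ?thesis using within_q assms(3) by blast
      next
        case False
        then have "t \<in> sdown T le q" using tq by (simp add: sdown_iff)
        then obtain u where u: "(t, u) \<in> le" "u \<in> sdown T le q" "(u, q) \<in> contracted"
          using contracted_cofinal[OF step(1)] by blast
        then obtain a b where ab: "a \<in> Vt u" "b \<in> Vt q" "(a, b) \<in> E"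
          by (auto simp: contracted_graph_def)
        have uq: "(u, q) \<in> le" using u(2) by (simp add: sdown_iff)
        have "(y, a) \<in> (E \<inter> parts_union Vt (interval t u) \<times> parts_union Vt (interval t u))\<^sup>*"
          using step(2)[OF u(2)] ab(1) u(1) by blast
        then have "(y, a) \<in> (E \<inter> ?I \<times> ?I)\<^sup>*"
          by (rule rtrancl_Restr_mono) (use interval_mono[OF uq] in \<open>auto simp: parts_union_def\<close>)
        moreover have "(a, b) \<in> E \<inter> ?I \<times> ?I"
          using ab part_subset_interval[OF u(1) uq] part_subset_interval[OF tq le_refl[OF step(1)]] by blast
        ultimately have "(y, b) \<in> (E \<inter> ?I \<times> ?I)\<^sup>*" by (rule rtrancl_into_rtrancl)
        then show ?thesis using within_q[OF ab(2)] by (rule rtrancl_trans)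
      qed
    qed
  qed
  then show ?thesis using assms(1,2) by blast
qed

text \<open>For a node \<open>t\<close>: the vertex set of \<open>G(\<lceil>t\<rceil>\<^sup>\<circ>)\<close>, the component of its complement
  containing \<open>V\<^sub>t\<close>, and the neighbourhood of that component in \<open>G(\<lceil>t\<rceil>\<^sup>\<circ>)\<close>.\<close>

definition below_parts :: "'t \<Rightarrow> 'v set" where
  "below_parts t = parts_union Vt (sdown T le t)"

definition upper_component :: "'t \<Rightarrow> 'v set" where
  "upper_component t = component_at VG E (below_parts t) (SOME x. x \<in> Vt t)"

definition upper_adhesion :: "'t \<Rightarrow> 'v set" where
  "upper_adhesion t = nbrs_in E (upper_component t) (below_parts t)"

lemma part_outside_below_parts: "t \<in> T \<Longrightarrow> Vt t \<subseteq> VG - below_parts t"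
  using part part_unique by (fastforce simp: below_parts_def parts_union_iff sdown_def)

lemma upper_component_at:
  assumes "t \<in> T" "x \<in> Vt t"
  shows "upper_component t = component_at VG E (below_parts t) x"
proof -
  have "(SOME x. x \<in> Vt t) \<in> Vt t" using assms by (metis someI_ex)
  then have "x \<in> upper_component t"
    unfolding upper_component_def
    using connected_subset_component_at[of E "Vt t" VG "below_parts t"] part[OF assms(1)]
      part_outside_below_parts[OF assms(1)] assms(2) by blast
  then show ?thesis unfolding upper_component_def by (rule component_at_eq[OF sym_E, symmetric])
qed

lemma upper_component_props:
  assumes "t \<in> T"
  shows "Vt t \<subseteq> upper_component t" "upper_component t \<subseteq> VG - below_parts t"
    "connected_in E (upper_component t)"
proof -
  obtain x where x: "x \<in> Vt t" using part[OF assms] by blast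
  then have x': "x \<in> VG - below_parts t" using part_outside_below_parts[OF assms] by blast
  show "Vt t \<subseteq> upper_component t"
    unfolding upper_component_at[OF assms x]
    using connected_subset_component_at part[OF assms] part_outside_below_parts[OF assms] x by metis
  show "upper_component t \<subseteq> VG - below_parts t"
    unfolding upper_component_at[OF assms x] using component_at_subset[OF x'] .
  show "connected_in E (upper_component t)"
    unfolding upper_component_at[OF assms x] using connected_component_at[OF sym_E x'] .
qed

lemma upper_component_above:
  assumes t: "t \<in> T" and y: "y \<in> upper_component t" and r: "r \<in> T" "y \<in> Vt r"
  shows "(t, r) \<in> le"
proof -
  let ?P = "parts_union Vt T"
  let ?O = "VG - ?P"
  let ?W = "below_parts t"
  obtain x0 where x0: "x0 \<in> Vt t" using part[OF t] by blast
  text \<open>Invariant along a walk from \<open>V\<^sub>t\<close> in \<open>G - G(\<lceil>t\<rceil>\<^sup>\<circ>)\<close>: a vertex in a part lies in a part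
    above \<open>t\<close>, and a vertex outside all parts hangs, via a walk outside all parts, from a part
    above \<open>t\<close>. Normality makes the parts met consecutively comparable.\<close>
  define hooked where "hooked y \<longleftrightarrow> (\<forall>r\<in>T. y \<in> Vt r \<longrightarrow> (t, r) \<in> le) \<and>
      (y \<notin> ?P \<longrightarrow> (\<exists>r\<in>T. (t, r) \<in> le \<and>
         (\<exists>x\<in>Vt r. \<exists>a\<in>?O. (x, a) \<in> E \<and> (a, y) \<in> (E \<inter> ?O \<times> ?O)\<^sup>*)))" for y
  have "(x0, y) \<in> (E \<inter> (VG - ?W) \<times> (VG - ?W))\<^sup>*"
    using y upper_component_at[OF t x0] by (simp add: component_at_def)
  then have "hooked y"
  proof (induction rule: rtrancl_induct)
    case base
    have "x0 \<in> ?P" using x0 t by (auto simp: parts_union_iff)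
    then show ?case using x0 t part_unique le_refl by (auto simp: hooked_def)
  next
    case (step y y')
    have yy': "(y, y') \<in> E" "y \<in> VG" "y' \<in> VG" "y' \<notin> ?W" using step(2) by auto
    have "(t, r') \<in> le" if r': "r' \<in> T" "y' \<in> Vt r'" for r'
    proof -
      have not_below: "r' \<notin> sdown T le t" using yy'(4) r' by (auto simp: below_parts_def parts_union_iff)
      obtain r where "r \<in> T" "(t, r) \<in> le" "comparable le r r'"
      proof (cases "y \<in> ?P")
        case True
        then obtain r where "r \<in> T" "y \<in> Vt r" by (auto simp: parts_union_iff)
        then show ?thesis using that step(3) edge_comparable[OF _ r'(1) _ r'(2) yy'(1)]
          by (auto simp: hooked_def)
      next
        case False
        then obtain r x a where "r \<in> T" "(t, r) \<in> le" "x \<in> Vt r" "a \<in> ?O" "(x, a) \<in> E"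
          "(a, y) \<in> (E \<inter> ?O \<times> ?O)\<^sup>*"
          using step(3) by (auto simp: hooked_def)
        then show ?thesis using that outside_walk_comparable[OF _ r'(1) _ r'(2) _ yy'(1)] by blast
      qed
      then show ?thesis using up_step r'(1) not_below by blast
    qed
    moreover have "\<exists>r\<in>T. (t, r) \<in> le \<and> (\<exists>x\<in>Vt r. \<exists>a\<in>?O. (x, a) \<in> E \<and> (a, y') \<in> (E \<inter> ?O \<times> ?O)\<^sup>*)"
      if "y' \<notin> ?P"
    proof (cases "y \<in> ?P")
      case True
      then obtain r where "r \<in> T" "y \<in> Vt r" by (auto simp: parts_union_iff)
      then show ?thesis using step(3) yy' that by (auto simp: hooked_def)
    next
      case False
      then have "(y, y') \<in> E \<inter> ?O \<times> ?O" using yy' that by blast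
      then show ?thesis using step(3) False by (auto simp: hooked_def intro: rtrancl_into_rtrancl)
    qed
    ultimately show ?case by (simp add: hooked_def)
  qed
  then show ?thesis using r by (simp add: hooked_def)
qed

lemma upper_components_disjoint:
  assumes "t \<in> T" "t' \<in> T" "sdown T le t = sdown T le t'" "t \<noteq> t'"
  shows "upper_component t \<inter> upper_component t' = {}"
proof (rule ccontr)
  assume "upper_component t \<inter> upper_component t' \<noteq> {}"
  then obtain y where y: "y \<in> upper_component t" "y \<in> upper_component t'" by blast
  obtain x x' where x: "x \<in> Vt t" "x' \<in> Vt t'" using part assms(1,2) by blast
  have W: "below_parts t' = below_parts t" using assms(3) by (simp add: below_parts_def)
  have "upper_component t = component_at VG E (below_parts t) y"
    using y(1) upper_component_at[OF assms(1) x(1)] component_at_eq[OF sym_E] by metis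
  moreover have "upper_component t' = component_at VG E (below_parts t) y"
    using y(2) upper_component_at[OF assms(2) x(2)] component_at_eq[OF sym_E] W by metis
  ultimately have same: "upper_component t = upper_component t'" by simp
  have "(t, t') \<in> le"
    using upper_component_above[OF assms(1) _ assms(2) x(2)] upper_component_props(1)[OF assms(2)] x(2) same
    by blast
  moreover have "(t', t) \<in> le"
    using upper_component_above[OF assms(2) _ assms(1) x(1)] upper_component_props(1)[OF assms(1)] x(1) same
    by blast
  ultimately show False using le_antisym assms(4) by blast
qed

lemma component_nbrs_subset_upper_adhesion:
  assumes S: "rooted_subtree T le S" and t: "t \<in> T - S" "sdown T le t \<subseteq> S" and tq: "(t, q) \<in> le"
    and C: "component_of VG E (parts_union Vt S) C" and u: "u \<in> C" "u \<in> Vt q"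
  shows "nbrs_in E C (parts_union Vt S) \<subseteq> upper_adhesion t"
proof -
  let ?W = "parts_union Vt S"
  have tT: "t \<in> T" using t by blast
  obtain x0 where x0: "x0 \<in> Vt t" using part[OF tT] by blast
  \<comment> \<open>The parts between \<open>t\<close> and \<open>q\<close> avoid \<open>G(S)\<close>, so \<open>C\<close> reaches \<open>V\<^sub>t\<close> and lies inside \<open>D\<^sub>t\<close>.\<close>
  have "parts_union Vt (interval t q) \<subseteq> VG - ?W"
  proof
    fix v assume "v \<in> parts_union Vt (interval t q)"
    then obtain r where r: "r \<in> T" "(t, r) \<in> le" "v \<in> Vt r"
      by (auto simp: interval_def parts_union_iff)
    have "r \<notin> S" using S t(1) r(2) by (auto simp: rooted_subtree_def)
    then have "v \<notin> ?W" using S r part_unique by (auto simp: parts_union_iff rooted_subtree_def)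
    then show "v \<in> VG - ?W" using part r(1,3) by blast
  qed
  then have "(x0, u) \<in> (E \<inter> (VG - ?W) \<times> (VG - ?W))\<^sup>*"
    by (rule rtrancl_Restr_mono[OF interval_parts_reach[OF tq u(2) x0]])
  then have "x0 \<in> component_at VG E ?W u"
    unfolding component_at_def using rtrancl_Restr_sym[OF sym_E] by simp
  then have "x0 \<in> C" using component_of_eq_component_at[OF sym_E C u(1)] by blast
  then have "C = component_at VG E ?W x0" by (rule component_of_eq_component_at[OF sym_E C])
  moreover have "below_parts t \<subseteq> ?W" using t(2) by (auto simp: below_parts_def parts_union_def)
  ultimately have C_sub: "C \<subseteq> component_at VG E (below_parts t) x0"
    using component_at_antimono[of "below_parts t" ?W VG E x0] by simp
  have x0': "x0 \<in> VG - below_parts t" using x0 part_outside_below_parts[OF tT] by blast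
  show ?thesis
  proof
    fix w assume "w \<in> nbrs_in E C ?W"
    then obtain c where w: "w \<in> ?W" "c \<in> C" "(c, w) \<in> E" by (auto simp: nbrs_in_def)
    show "w \<in> upper_adhesion t"
    proof (cases "w \<in> below_parts t")
      case True
      then show ?thesis
        using w C_sub upper_component_at[OF tT x0] by (auto simp: upper_adhesion_def nbrs_in_def)
    next
      case False
      have "w \<in> VG" using w(3) E_subset by blast
      then have "w \<in> component_at VG E (below_parts t) x0"
        using component_at_edge[OF x0' _ _ w(3)] C_sub w(2) False by blast
      then have w_up: "w \<in> upper_component t" using upper_component_at[OF tT x0] by simp
      obtain r where r: "r \<in> S" "w \<in> Vt r" using w(1) by (auto simp: parts_union_iff)
      then have "r \<in> T" using S by (auto simp: rooted_subtree_def)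
      then have "(t, r) \<in> le" using upper_component_above[OF tT w_up _ r(2)] by blast
      then show ?thesis using S r(1) t(1) by (auto simp: rooted_subtree_def)
    qed
  qed
qed

lemma limit_in_back_nbr_closed:
  assumes r: "total_on S r" "finite (back_nbrs S contracted r t)" and t: "t \<in> S" "limit_node t"
    and S: "S \<subseteq> T" "S' \<subseteq> S" "sdown T le t \<subseteq> S'"
    and closed: "\<forall>b\<in>S'. back_nbrs S contracted r b \<subseteq> S'"
  shows "t \<in> S'"
proof -
  let ?N = "{u \<in> sdown T le t. (u, t) \<in> contracted}"
  have "infinite ?N" using infinite_lower_nbrs_if_limit t S(1) by blast
  moreover have "?N \<subseteq> S" using S by blast
  moreover have "(y, t) \<in> contracted \<and> y \<noteq> t" if "y \<in> ?N" for y
    using that by (simp add: sdown_iff)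
  ultimately obtain b where b: "b \<in> ?N" "(t, b) \<in> r"
    using exists_later_nbr[OF r(1) t(1)] r(2) by blast
  then have "t \<in> back_nbrs S contracted r b"
    using t(1) contracted_sym by (auto simp: back_nbrs_def sdown_iff)
  then show ?thesis using closed b(1) S(3) by blast
qed

end

section \<open>Slim rooted normal semi-partition trees\<close>

locale slim_rooted_tree = semi_partition_tree VG E T le Vt + rooted_minor_ccn VG E U
  for VG :: "'v set" and E U and T :: "'t set" and le Vt +
  assumes slim: "slim T le Vt" and rooted: "U_rooted_parts T Vt U"
    and U_parts: "U \<subseteq> parts_union Vt T"
begin

lemma part_countable_if:
  assumes "t \<in> T" "countable (sdown T le t)"
  shows "countable (Vt t)"
proof -
  have "Vt t \<lesssim> sdown T le t <+> (UNIV :: nat set)" using slim assms(1) by (simp add: slim_def)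
  moreover have "countable (sdown T le t <+> (UNIV :: nat set))" using assms(2) by simp
  ultimately show ?thesis by (meson countable_lepoll)
qed

lemma contracted_total_order:
  assumes "S \<subseteq> T" "\<forall>s\<in>S. countable (Vt s)"
  shows "\<exists>r. total_on S r \<and> (\<forall>s\<in>S. finite (back_nbrs S contracted r s))"
proof -
  have "rooted_model VG E U S Vt (contracted \<inter> S \<times> S)"
    unfolding rooted_model_def
  proof (intro conjI)
    show "\<forall>s\<in>S. Vt s \<subseteq> VG \<and> connected_in E (Vt s) \<and> Vt s \<inter> U \<noteq> {}"
      using assms(1) part rooted by (auto simp: U_rooted_parts_def)
    show "\<forall>s\<in>S. \<forall>t\<in>S. s \<noteq> t \<longrightarrow> Vt s \<inter> Vt t = {}"
      using assms(1) part_unique by blast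
    have "sym (contracted \<inter> S \<times> S)" using contracted_sym by (auto simp: sym_def)
    moreover have "irrefl (contracted \<inter> S \<times> S)" by (auto simp: irrefl_def contracted_graph_def)
    ultimately show "graph S (contracted \<inter> S \<times> S)" by (auto simp: graph_def)
    show "\<forall>(s, t)\<in>contracted \<inter> S \<times> S. \<exists>x\<in>Vt s. \<exists>y\<in>Vt t. (x, y) \<in> E"
      by (auto simp: contracted_graph_def)
  qed
  then obtain r where "total_on S r" "\<forall>s\<in>S. finite (back_nbrs S (contracted \<inter> S \<times> S) r s)"
    using model_total_order assms(2) by blast
  moreover have "back_nbrs S (contracted \<inter> S \<times> S) r s = back_nbrs S contracted r s" if "s \<in> S" for s
    using that by (auto simp: back_nbrs_def)
  ultimately show ?thesis by auto
qed

lemma countable_sdown_if_below_countable: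
  assumes t: "t \<in> T" and below: "\<forall>k\<in>sdown T le t. countable (down T le k)"
  shows "countable (sdown T le t)"
proof (rule ccontr)
  let ?K = "sdown T le t"
  assume unc: "uncountable ?K"
  have K_T: "?K \<subseteq> T" by (auto simp: sdown_def)
  have K_subtree: "rooted_subtree T le ?K"
    unfolding rooted_subtree_def
  proof (intro conjI ballI impI)
    fix k s assume k: "k \<in> ?K" and s: "s \<in> T" "(s, k) \<in> le"
    have kt: "(k, t) \<in> le" "k \<noteq> t" using k by (simp_all add: sdown_iff)
    have "(s, t) \<in> le" using le_trans[OF s(2) kt(1)] .
    moreover have "s \<noteq> t" using s(2) kt le_antisym by blast
    ultimately show "s \<in> ?K" by (simp add: sdown_iff)
  qed (rule K_T)
  have "countable (Vt k)" if k: "k \<in> ?K" for k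
  proof -
    have "sdown T le k \<subseteq> down T le k" by (auto simp: sdown_iff down_iff)
    then have "countable (sdown T le k)" using below k countable_subset by blast
    then show ?thesis using part_countable_if K_T k by blast
  qed
  then obtain r where r: "total_on ?K r" "\<forall>k\<in>?K. finite (back_nbrs ?K contracted r k)"
    using contracted_total_order[OF K_T] by blast
  have nomax: "\<forall>k\<in>?K. \<exists>k'\<in>?K. (k, k') \<in> le \<and> k \<noteq> k'"
  proof (intro ballI, rule ccontr)
    fix k assume k: "k \<in> ?K" and no_later: "\<not> (\<exists>k'\<in>?K. (k, k') \<in> le \<and> k \<noteq> k')"
    have "?K \<subseteq> down T le k"
    proof
      fix x assume x: "x \<in> ?K"
      have "comparable le x k" using comparable_below[of x t k] x k by (simp add: sdown_iff)
      moreover have "(k, x) \<in> le \<Longrightarrow> x = k" using no_later x by blast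
      ultimately show "x \<in> down T le k" using le_refl K_T k by (auto simp: comparable_def down_iff)
    qed
    then show False using below k unc countable_subset by blast
  qed
  have closing: "\<forall>k\<in>?K. back_nbrs ?K contracted r k \<subseteq> ?K \<and> countable (back_nbrs ?K contracted r k)"
    using r(2) by (auto simp: back_nbrs_def intro: countable_finite)
  have "?K \<noteq> {}" using unc by auto
  then obtain k0 where k0: "k0 \<in> ?K" by blast
  obtain I where I: "I \<subseteq> ?K" "countable I" "k0 \<in> I" "rooted_subtree T le I"
    "\<forall>i\<in>I. \<exists>j\<in>I. (i, j) \<in> le \<and> i \<noteq> j" "\<forall>i\<in>I. back_nbrs ?K contracted r i \<subseteq> I"
    using countable_closed_subchain[OF K_subtree k0 below nomax closing] by blast
  obtain q where "q \<in> ?K - I" using unc I(2) by (metis countable_subset ex_in_conv Diff_eq_empty_iff)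
  then obtain d where d: "d \<in> T - I" "(d, q) \<in> le" "sdown T le d \<subseteq> I"
    using min_outside_subtree[OF I(4)] K_T by blast
  have "d \<in> ?K" using K_subtree d(1,2) \<open>q \<in> ?K - I\<close> by (auto simp: rooted_subtree_def)
  have "comparable le i d" if "i \<in> I" for i
    using comparable_below[of i t d] that I(1) \<open>d \<in> ?K\<close> by (auto simp: sdown_iff)
  then have "sdown T le d = I" by (rule sdown_eq_subtree[OF I(4) d(3,1)])
  then have "limit_node d" using I(3,5) by (auto simp: limit_node_def)
  then have "d \<in> I"
    using limit_in_back_nbr_closed[OF r(1) _ \<open>d \<in> ?K\<close> _ K_T I(1) d(3) I(6)] r(2) \<open>d \<in> ?K\<close>
    by blast
  then show False using d(1) by blast
qed

lemma down_countable: "t \<in> T \<Longrightarrow> countable (down T le t)"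
proof (induction t rule: sdown_induct)
  case (step t)
  have "\<forall>k\<in>sdown T le t. countable (down T le k)" using step(2) by blast
  then have "countable (sdown T le t)" using countable_sdown_if_below_countable[OF step(1)] by blast
  moreover have "down T le t = insert t (sdown T le t)"
    using step(1) le_refl by (auto simp: down_iff sdown_iff)
  ultimately show ?case by simp
qed

lemma part_countable: "t \<in> T \<Longrightarrow> countable (Vt t)"
  using part_countable_if down_countable countable_subset[of "sdown T le t" "down T le t"]
  by (auto simp: sdown_def down_def)

definition bad_children :: "'t \<Rightarrow> 't set" where
  "bad_children s = {t \<in> T. sdown T le t = down T le s \<and> infinite (upper_adhesion t)}"

lemma bad_children_countable:
  assumes "s \<in> T"
  shows "countable (bad_children s)"
proof (rule countable_if_infinitely_attached)
  let ?Y = "parts_union Vt (down T le s)"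
  have "\<forall>r\<in>down T le s. countable (Vt r)" using part_countable by (auto simp: down_def)
  then show "countable ?Y"
    unfolding parts_union_def using down_countable[OF assms] by (blast intro: countable_UN)
  fix z assume z: "z \<in> bad_children s"
  then have zT: "z \<in> T" and Y: "below_parts z = ?Y" and inf: "infinite (upper_adhesion z)"
    by (auto simp: bad_children_def below_parts_def)
  have "Vt z \<inter> U \<noteq> {}" using rooted zT by (auto simp: U_rooted_parts_def)
  then show "upper_component z \<subseteq> VG - ?Y \<and> connected_in E (upper_component z) \<and>
      upper_component z \<inter> U \<noteq> {} \<and> infinite (nbrs_in E (upper_component z) ?Y)"
    using upper_component_props[OF zT] Y inf by (auto simp: upper_adhesion_def)
next
  fix z z' assume "z \<in> bad_children s" "z' \<in> bad_children s" "z \<noteq> z'"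
  then show "upper_component z \<inter> upper_component z' = {}"
    using upper_components_disjoint by (auto simp: bad_children_def)
qed

lemma finite_adhesion_if_closed:
  assumes S: "rooted_subtree T le S" "S \<noteq> {}"
    and r: "total_on T r" "\<forall>x\<in>T. finite (back_nbrs T contracted r x)"
    and closed: "\<forall>x\<in>S. back_nbrs T contracted r x \<subseteq> S \<and> bad_children x \<subseteq> S"
  shows "finite_adhesion_towards VG E (parts_union Vt S) U"
  unfolding finite_adhesion_towards_iff
proof (intro allI impI)
  let ?W = "parts_union Vt S"
  fix C assume "component_of VG E ?W C \<and> C \<inter> U \<noteq> {}"
  then obtain u where C: "component_of VG E ?W C" and u: "u \<in> C" "u \<in> U" by blast
  have "u \<in> parts_union Vt T" using U_parts u(2) by blast
  then obtain q where q: "q \<in> T" "u \<in> Vt q" by (auto simp: parts_union_iff)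
  have "C \<subseteq> VG - ?W" using C by (simp add: component_of_def)
  then have "q \<notin> S" using u(1) q(2) by (auto simp: parts_union_iff)
  then obtain t where t: "t \<in> T - S" "(t, q) \<in> le" "sdown T le t \<subseteq> S"
    using min_outside_subtree[OF S(1)] q(1) by blast
  have "sdown T le t \<noteq> {}"
  proof
    assume "sdown T le t = {}"
    moreover obtain x where "x \<in> S" using S(2) by blast
    moreover have "x \<in> T" using S(1) \<open>x \<in> S\<close> by (auto simp: rooted_subtree_def)
    ultimately have "(t, x) \<in> le" using root_below[of t x] t(1) by blast
    then show False using S(1) t(1) \<open>x \<in> S\<close> by (auto simp: rooted_subtree_def)
  qed
  then consider "limit_node t" | s where "s \<in> T" "sdown T le t = down T le s"
    using successor_or_limit by blast
  then show "finite (nbrs_in E C ?W)"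
  proof cases
    case 1
    have tT: "t \<in> T" using t(1) by blast
    have "S \<subseteq> T" using S(1) by (simp add: rooted_subtree_def)
    moreover have "\<forall>b\<in>S. back_nbrs T contracted r b \<subseteq> S" using closed by blast
    ultimately have "t \<in> S"
      using limit_in_back_nbr_closed[OF r(1) r(2)[rule_format, OF tT] tT 1 subset_refl _ t(3)] by blast
    then show ?thesis using t(1) by blast
  next
    case (2 s)
    then have "s \<in> S" using t(3) le_refl by (auto simp: down_iff)
    then have "t \<notin> bad_children s" using closed t(1) by blast
    then have "finite (upper_adhesion t)" using t(1) 2(2) by (auto simp: bad_children_def)
    moreover have "nbrs_in E C ?W \<subseteq> upper_adhesion t"
      using component_nbrs_subset_upper_adhesion[OF S(1) t(1,3,2) C u(1) q(2)] .
    ultimately show ?thesis by (rule finite_subset[rotated])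
  qed
qed

lemma rooted_subtree_of_finite_adhesion:
  assumes X: "X \<subseteq> T" "infinite X"
  shows "\<exists>T'. rooted_subtree T le T' \<and> X \<subseteq> T' \<and> T' \<approx> X \<and>
              finite_adhesion_towards VG E (parts_union Vt T') U"
proof -
  obtain r where r: "total_on T r" "\<forall>x\<in>T. finite (back_nbrs T contracted r x)"
    using contracted_total_order[of T] part_countable by blast
  define g where "g x = down T le x \<union> back_nbrs T contracted r x \<union> bad_children x" for x
  define T' where "T' = closure_under g X"
  have g: "g x \<subseteq> T \<and> countable (g x)" if "x \<in> T" for x
    using that down_countable bad_children_countable r(2)
    by (auto simp: g_def down_def back_nbrs_def bad_children_def intro: countable_finite)
  have "X \<subseteq> T'" unfolding T'_def by (rule subset_closure_under)
  moreover have "T' \<lesssim> X" unfolding T'_def by (rule closure_under_lepoll[OF X(2,1)]) (use g in blast)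
  moreover have closed: "g x \<subseteq> T'" if "x \<in> T'" for x
    using that closure_under_closed[of x g X] unfolding T'_def by blast
  moreover have "T' \<subseteq> T" unfolding T'_def by (rule closure_under_subset[OF X(1)]) (use g in blast)
  then have subtree: "rooted_subtree T le T'"
    unfolding rooted_subtree_def
  proof (intro conjI ballI impI)
    fix x s assume "x \<in> T'" "s \<in> T" "(s, x) \<in> le"
    then show "s \<in> T'" using closed[OF \<open>x \<in> T'\<close>] by (auto simp: g_def down_def)
  qed
  moreover have "finite_adhesion_towards VG E (parts_union Vt T') U"
  proof (rule finite_adhesion_if_closed[OF subtree _ r])
    show "T' \<noteq> {}" using \<open>X \<subseteq> T'\<close> X(2) by auto
    show "\<forall>x\<in>T'. back_nbrs T contracted r x \<subseteq> T' \<and> bad_children x \<subseteq> T'"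
      using closed by (auto simp: g_def)
  qed
  ultimately show ?thesis using lepoll_antisym subset_imp_lepoll by blast
qed

end

theorem lemma5p4:
  fixes VG :: "'v set" and E :: "('v \<times> 'v) set" and U :: "'v set"
    and T :: "'t set" and le :: "('t \<times> 't) set" and Vt :: "'t \<Rightarrow> 'v set"
  assumes "graph VG E"
    and "connected_in E VG"
    and "U \<subseteq> VG"
    and "\<forall>B F. rooted_minor VG E U B F \<and> (\<forall>b\<in>B. countable b)
               \<longrightarrow> countable_colouring_number B F"
    and "normal_semi_partition_tree VG E T le Vt"
    and "slim T le Vt"
    and "U_rooted_parts T Vt U"
    and "U \<subseteq> parts_union Vt T"
  shows "\<forall>X. X \<subseteq> T \<and> infinite X \<longrightarrow>
           (\<exists>T'. rooted_subtree T le T' \<and> X \<subseteq> T' \<and> T' \<approx> X \<and>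
                 finite_adhesion_towards VG E (parts_union Vt T') U)"
proof -
  interpret slim_rooted_tree VG E U T le Vt
    using assms by unfold_locales auto
  show ?thesis using rooted_subtree_of_finite_adhesion by blast
qed

end
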